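(* Let $r\ge1$, $\mathbf{m}=(m_1,\ldots,m_r)\in\mathbb{N}^r$, $m=m_1+\cdots+m_r$, $\mathbf{f}=(f_1,\ldots,f_r)\in\mathbb{C}^r$ and $a,b,c\in\mathbb{C}$ be such that $(c-b-m)_{m}\neq0$. Then for all $x\in\mathbb{C}\setminus[1,\infty)$, $$ {}_{r+2}F_{r+1}\!\left(\begin{matrix}a,b,\mathbf{f}+\mathbf{m}\\ c,\mathbf{f}\end{matrix}\,\middle|\, x\right) =(1-x)^{-a}\,{}_{m+2}F_{m+1}\!\left(\begin{matrix}a,c-b-m,\boldsymbol{\zeta}+1\\ c,\boldsymbol{\zeta}\end{matrix}\,\middle|\, \frac{x}{x-1}\right), $$ where $\boldsymbol{\zeta}=(\zeta_1,\ldots,\zeta_m)$ are the roots of the polynomial $$ P_m(x)=\frac{1}{(c-b-m)_m}\sum_{k=0}^m(b)_{k}(1-c+b)_{k}D_{k}\,(c-b-m-x)_{m-k}, $$ with $D_k=\sum_{j=k}^m\alpha_j\mathbf{S}_j^{(k)}=\frac{(-1)^k(\mathbf{f}-b)_{\mathbf{m}}}{k!}{}_{r+1}F_{r}\!\left(\begin{matrix}-k,1-\mathbf{f}+b\\1-\mathbf{f}+b-\mathbf{m}\end{matrix}\right)$, where $(\mathbf{f}-b-t)_{\mathbf{m}}=\sum_{j=0}^m\alpha_jt^j$.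
   Context: $(a)_k=\Gamma(a+k)/\Gamma(a)$. For vectors: $(\mathbf{f})_{\mathbf{m}}=\prod_i(f_i)_{m_i}$, $\mathbf{f}+\alpha$, $\mathbf{f}+\mathbf{m}$ componentwise; a vector among hypergeometric parameters means its components are listed. ${}_pF_q(\mathbf{a};\mathbf{b};x)$ is the generalized hypergeometric function (principal branch, analytically continued to $\mathbb{C}\setminus[1,\infty)$ when $p=q+1$), and ${}_pF_q(\mathbf{a};\mathbf{b})$ denotes its value at $1$. $(1-x)^{-a}$ is the principal branch. $\mathbf{S}_j^{(k)}$ are Stirling numbers of the second kind. The roots are listed with multiplicity. *)

theory Defs
  imports "HOL-Complex_Analysis.Complex_Analysis" "HOL-Combinatorics.Stirling"
    "HOL-Computational_Algebra.Polynomial"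
begin

definition hyp_coeff :: "complex list \<Rightarrow> complex list \<Rightarrow> nat \<Rightarrow> complex" where
  "hyp_coeff as bs n =
     (\<Prod>a\<leftarrow>as. pochhammer a n) / ((\<Prod>b\<leftarrow>bs. pochhammer b n) * fact n)"

definition hyp_series :: "complex list \<Rightarrow> complex list \<Rightarrow> complex \<Rightarrow> complex" where
  "hyp_series as bs x = (\<Sum>n. hyp_coeff as bs n * x ^ n)"

definition cut_plane :: "complex set" where
  "cut_plane = - (complex_of_real ` {1..})"

text \<open>Principal branch of pFq for p = q+1: the holomorphic function on the cut plane
  agreeing with the power series on the open unit disc (unique by the identity theorem).\<close>
definition hypF :: "complex list \<Rightarrow> complex list \<Rightarrow> complex \<Rightarrow> complex" where
  "hypF as bs =
     (if \<exists>g. g holomorphic_on cut_plane \<and> (\<forall>z. norm z < 1 \<longrightarrow> g z = hyp_series as bs z)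
      then (SOME g. g holomorphic_on cut_plane \<and> (\<forall>z. norm z < 1 \<longrightarrow> g z = hyp_series as bs z))
      else hyp_series as bs)"

text \<open>Polynomial in t: (u - t)_k = prod_{l<k} (u + l - t).\<close>
definition poch_poly :: "complex \<Rightarrow> nat \<Rightarrow> complex poly" where
  "poch_poly u k = (\<Prod>l<k. [:u + of_nat l, -1:])"

definition alpha_coef :: "complex list \<Rightarrow> nat list \<Rightarrow> complex \<Rightarrow> nat \<Rightarrow> complex" where
  "alpha_coef fs ms b j = coeff (\<Prod>i<length fs. poch_poly (fs ! i - b) (ms ! i)) j"

definition D_coef :: "complex list \<Rightarrow> nat list \<Rightarrow> complex \<Rightarrow> nat \<Rightarrow> complex" where
  "D_coef fs ms b k = (\<Sum>j=k..sum_list ms. alpha_coef fs ms b j * of_nat (Stirling j k))"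

definition P_poly :: "complex list \<Rightarrow> nat list \<Rightarrow> complex \<Rightarrow> complex \<Rightarrow> complex poly" where
  "P_poly fs ms b c =
     (let m = sum_list ms in
      smult (1 / pochhammer (c - b - of_nat m) m)
        (\<Sum>k=0..m. smult (pochhammer b k * pochhammer (1 - c + b) k * D_coef fs ms b k)
                          (poch_poly (c - b - of_nat m) (m - k))))"

end

theory Submission
  imports Defs
begin

text \<open>The numbers \<open>D_k\<close> are the coefficients of \<open>(f - b + y)_m\<close> in the basis
  \<open>(-1)^k (y)_k\<close>. Taking \<open>y = b + n\<close> writes the \<open>n\<close>-th coefficient of the left-hand side as a
  finite combination \<open>\<Sum>k. w_k (a)_n (b + k)_n / ((c)_n n!)\<close> of Gauss coefficients. Evaluating
  \<open>P_m\<close> at \<open>-n\<close>, once through its definition and once through its roots \<open>\<zeta>\<close>, shows that the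
  coefficients of the series on the right are the same combination with \<open>b + k\<close> replaced by
  \<open>c - b - k\<close>. Pfaff's transformation \<open>2F1(a, b; c; x) = (1 - x)^(-a) 2F1(a, c - b; c; x/(x - 1))\<close>,
  applied termwise, then gives the identity.

  Pfaff's transformation is proved near \<open>0\<close> by summing a double series in two ways and extended to
  the cut plane by analytic continuation; that \<open>2F1\<close> continues to the cut plane at all follows from
  Euler's integral for \<open>Re b, Re (c - b) > 2\<close> and the contiguous relations lowering \<open>b\<close> and \<open>c\<close>
  by one.\<close>

section \<open>Non-positive integers and the cut plane\<close>

lemma pochhammer_neq_0_if_notin_nonpos_Ints:
  "(z::'a::field_char_0) \<notin> \<int>\<^sub>\<le>\<^sub>0 \<Longrightarrow> pochhammer z n \<noteq> 0"
  using pochhammer_eq_0_imp_nonpos_Int by blast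

lemma add_of_nat_neq_0_if_notin_nonpos_Ints:
  "(z::'a::ring_char_0) \<notin> \<int>\<^sub>\<le>\<^sub>0 \<Longrightarrow> z + of_nat n \<noteq> 0"
  using plus_of_nat_eq_0_imp by blast

lemma add_of_nat_notin_nonpos_Ints:
  assumes "(z::'a::ring_char_0) \<notin> \<int>\<^sub>\<le>\<^sub>0"
  shows "z + of_nat n \<notin> \<int>\<^sub>\<le>\<^sub>0"
  using assms nonpos_Ints_diff_Nats[of "z + of_nat n" "of_nat n"] by auto

lemma minus_one_notin_nonpos_Ints:
  assumes "(z::'a::ring_char_0) \<notin> \<int>\<^sub>\<le>\<^sub>0" "z \<noteq> 1"
  shows "z - 1 \<notin> \<int>\<^sub>\<le>\<^sub>0"
proof
  assume "z - 1 \<in> \<int>\<^sub>\<le>\<^sub>0"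
  then obtain n :: nat where "z - 1 = - of_nat n" by (rule nonpos_Ints_cases')
  with assms plus_of_nat_eq_0_imp[of z] show False by (cases n) (auto simp: algebra_simps)
qed

lemma re_gt_0_notin_nonpos_Ints: "Re z > 0 \<Longrightarrow> z \<notin> \<int>\<^sub>\<le>\<^sub>0"
  by (auto elim!: nonpos_Ints_cases)

lemma notin_nonpos_Ints_iff: "(z::'a::ring_char_0) \<notin> \<int>\<^sub>\<le>\<^sub>0 \<longleftrightarrow> (\<forall>n::nat. z \<noteq> - of_nat n)"
  by (auto elim!: nonpos_Ints_cases')

lemma mem_cut_plane: "z \<in> cut_plane \<longleftrightarrow> Im z \<noteq> 0 \<or> Re z < 1"
proof -
  have "complex_of_real ` {1..} = {z. Im z = 0 \<and> Re z \<ge> 1}"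
    by (auto simp: image_iff complex_eq_iff intro!: exI[of _ "Re _"])
  thus ?thesis unfolding cut_plane_def by auto
qed

lemma open_cut_plane: "open cut_plane"
proof -
  have "cut_plane = {z. Im z \<noteq> 0} \<union> {z. Re z < 1}" by (auto simp: mem_cut_plane)
  moreover have "open {z::complex. Im z \<noteq> 0}" "open {z::complex. Re z < 1}"
    by (intro open_Collect_neq open_Collect_less continuous_intros)+
  ultimately show ?thesis by (metis open_Un)
qed

lemma mult_less_one_of_unit_interval:
  fixes u y :: real
  assumes "0 \<le> u" "u \<le> 1" "y < 1"
  shows "u * y < 1"
proof (cases "y \<ge> 0")
  case True
  thus ?thesis using assms mult_left_le_one_le[of y u] by (simp add: mult.commute)
next
  case False
  thus ?thesis using assms mult_nonneg_nonpos[of u y] by simp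
qed

lemma of_real_mult_mem_cut_plane:
  assumes "x \<in> cut_plane" "0 \<le> u" "u \<le> 1"
  shows "of_real u * x \<in> cut_plane"
  using assms mult_less_one_of_unit_interval[of u "Re x"]
  by (cases "u = 0") (auto simp: mem_cut_plane)

lemma connected_cut_plane: "connected cut_plane"
proof (rule starlike_imp_connected)
  show "starlike cut_plane" unfolding starlike_def
  proof (intro bexI ballI subsetI)
    fix x y assume "x \<in> cut_plane" "y \<in> closed_segment 0 x"
    then show "y \<in> cut_plane"
      by (auto simp: closed_segment_def scaleR_conv_of_real intro: of_real_mult_mem_cut_plane)
  qed (simp add: mem_cut_plane)
qed

lemma ball_subset_cut_plane: "ball 0 1 \<subseteq> cut_plane"
proof
  fix z :: complex assume "z \<in> ball 0 1"
  thus "z \<in> cut_plane" using abs_Re_le_cmod[of z] by (auto simp: mem_cut_plane)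
qed

lemma one_minus_mult_of_real_notin_nonpos_Reals:
  assumes "x \<in> cut_plane" "0 \<le> t" "t \<le> 1"
  shows "1 - x * of_real t \<notin> \<real>\<^sub>\<le>\<^sub>0"
proof
  assume "1 - x * of_real t \<in> \<real>\<^sub>\<le>\<^sub>0"
  hence "1 \<le> Re x * t" and "Im x * t = 0" by (auto simp: complex_nonpos_Reals_iff)
  moreover have "Re x * t < 1" if "Im x = 0"
    using assms that mult_less_one_of_unit_interval[of t "Re x"] by (auto simp: mem_cut_plane mult.commute)
  ultimately show False by (cases "t = 0") auto
qed

lemma pfaff_map_mem_cut_plane:
  assumes "x \<in> cut_plane"
  shows "x / (x - 1) \<in> cut_plane"
proof (rule ccontr)
  assume "x / (x - 1) \<notin> cut_plane"
  then obtain t where t: "t \<ge> 1" "x / (x - 1) = of_real t"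
    by (auto simp: cut_plane_def)
  have "x \<noteq> 1" using assms by (auto simp: mem_cut_plane)
  hence "x * (of_real t - 1) = of_real t" using t(2) by (simp add: field_simps)
  moreover from this have "t \<noteq> 1" by auto
  ultimately have "x = of_real (t / (t - 1))" by (simp add: field_simps)
  moreover have "t / (t - 1) \<ge> 1" using t \<open>t \<noteq> 1\<close> by (simp add: field_simps)
  ultimately show False using assms by (simp add: mem_cut_plane)
qed

lemma norm_pfaff_map_less_one:
  assumes "norm (z::complex) < 1/2"
  shows "norm (z / (z - 1)) < 1"
proof -
  have "norm z < norm (z - 1)"
    using assms norm_triangle_ineq2[of 1 z] by (simp add: norm_minus_commute)
  thus ?thesis by (simp add: norm_divide divide_less_eq)
qed

lemma continuous_on_powr_notin_nonpos_Reals: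
  fixes f g :: "'a::topological_space \<Rightarrow> complex"
  assumes "continuous_on A f" "continuous_on A g" "\<And>z. z \<in> A \<Longrightarrow> f z \<notin> \<real>\<^sub>\<le>\<^sub>0"
  shows "continuous_on A (\<lambda>z. f z powr g z)"
  using assms by (intro continuous_on_powr_complex) (force simp: complex_nonpos_Reals_iff)+

definition hyp_continuation :: "complex list \<Rightarrow> complex list \<Rightarrow> (complex \<Rightarrow> complex) \<Rightarrow> bool" where
  "hyp_continuation as bs g \<longleftrightarrow>
     g holomorphic_on cut_plane \<and> (\<forall>z. norm z < 1 \<longrightarrow> g z = hyp_series as bs z)"

lemma hypF_eqI:
  assumes "hyp_continuation as bs g" "x \<in> cut_plane"
  shows "hypF as bs x = g x"
proof -
  define h where "h = (SOME g. hyp_continuation as bs g)"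
  have "hypF as bs = h"
    using assms(1) by (auto simp: hypF_def h_def hyp_continuation_def)
  moreover have h: "hyp_continuation as bs h"
    unfolding h_def using assms(1) by (rule someI[of "hyp_continuation as bs"])
  have "h x = g x"
  proof (rule analytic_continuation_open[of "ball 0 1" cut_plane h g])
    show "h z = g z" if "z \<in> ball 0 1" for z
      using h assms(1) that by (auto simp: hyp_continuation_def)
  qed (use assms h open_cut_plane connected_cut_plane ball_subset_cut_plane
       in \<open>auto simp: hyp_continuation_def\<close>)
  ultimately show ?thesis by simp
qed

lemma hyp_continuation_hypF:
  assumes "hyp_continuation as bs g"
  shows "hyp_continuation as bs (hypF as bs)"
proof -
  have "hypF as bs holomorphic_on cut_plane"
    using assms by (subst holomorphic_cong[OF refl hypF_eqI]) (auto simp: hyp_continuation_def)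
  thus ?thesis
    using assms ball_subset_cut_plane by (auto simp: hyp_continuation_def hypF_eqI)
qed

section \<open>Gauss's series\<close>

lemma tendsto_add_of_nat_divide_add_of_nat:
  "(\<lambda>n. (a + of_nat n) / (c + of_nat n) :: 'a::real_normed_field) \<longlonglongrightarrow> 1"
proof -
  have "(\<lambda>n. (a * inverse (of_nat n) + 1) / (c * inverse (of_nat n) + 1)) \<longlonglongrightarrow> (a * 0 + 1) / (c * 0 + 1)"
    by (intro tendsto_intros lim_inverse_n) simp
  moreover have "\<forall>\<^sub>F n in sequentially.
      (a * inverse (of_nat n) + 1) / (c * inverse (of_nat n) + 1) = (a + of_nat n) / (c + of_nat n)"
    using eventually_gt_at_top[of 0]
  proof eventually_elim
    case (elim n)
    hence "(of_nat n :: 'a) \<noteq> 0" by simp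
    thus ?case by (simp add: divide_simps)
  qed
  ultimately show ?thesis by (simp add: tendsto_cong)
qed

definition gauss_coeff :: "complex \<Rightarrow> complex \<Rightarrow> complex \<Rightarrow> nat \<Rightarrow> complex" where
  "gauss_coeff a b c n = pochhammer a n * pochhammer b n / (pochhammer c n * fact n)"

lemma hyp_coeff_gauss: "hyp_coeff [a, b] [c] = gauss_coeff a b c"
  by (simp add: fun_eq_iff hyp_coeff_def gauss_coeff_def)

lemma gauss_coeff_0 [simp]: "gauss_coeff a b c 0 = 1"
  by (simp add: gauss_coeff_def)

lemma gauss_coeff_Suc:
  "gauss_coeff a b c (Suc n) =
     gauss_coeff a b c n * ((a + of_nat n) * (b + of_nat n) / ((c + of_nat n) * (of_nat n + 1)))"
  by (simp add: gauss_coeff_def pochhammer_rec' field_simps)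

lemma summable_norm_gauss_series:
  assumes "norm (z::complex) < 1"
  shows "summable (\<lambda>n. norm (gauss_coeff a b c n * z ^ n))"
proof (cases "z = 0")
  case True
  thus ?thesis using summable_0_powser[of "\<lambda>n. norm (gauss_coeff a b c n)"] by (simp add: norm_mult norm_power)
next
  case False
  define q where "q = (1 + norm z) / 2"
  define \<rho> where "\<rho> = (\<lambda>n. (a + of_nat n) * (b + of_nat n) / ((c + of_nat n) * (of_nat n + 1)))"
  have q: "q < 1" "norm z < q" using assms by (auto simp: q_def)
  have "\<rho> \<longlonglongrightarrow> 1 * 1"
    unfolding \<rho>_def times_divide_times_eq[symmetric]
    using tendsto_mult[OF tendsto_add_of_nat_divide_add_of_nat[of a 1] tendsto_add_of_nat_divide_add_of_nat[of b c]]
    by (simp add: add.commute mult.commute)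
  moreover have "q / norm z - 1 > 0" using q False by (simp add: field_simps)
  ultimately obtain N where N: "\<And>n. n \<ge> N \<Longrightarrow> norm (\<rho> n - 1) < q / norm z - 1"
    unfolding LIMSEQ_iff by (metis mult_1)
  show ?thesis
  proof (rule summable_ratio_test[OF q(1), of N])
    fix n assume "N \<le> n"
    have "norm (\<rho> n) \<le> norm (\<rho> n - 1) + 1" using norm_triangle_ineq[of "\<rho> n - 1" 1] by simp
    with N[OF \<open>N \<le> n\<close>] have "norm (\<rho> n) < q / norm z" by simp
    hence "norm (\<rho> n) * norm z \<le> q" using False by (simp add: pos_less_divide_eq)
    moreover have "gauss_coeff a b c (Suc n) * z ^ Suc n = (gauss_coeff a b c n * z ^ n) * (\<rho> n * z)"
      by (simp add: gauss_coeff_Suc \<rho>_def)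
    hence "norm (gauss_coeff a b c (Suc n) * z ^ Suc n) = norm (gauss_coeff a b c n * z ^ n) * (norm (\<rho> n) * norm z)"
      by (simp only: norm_mult)
    ultimately show "norm (norm (gauss_coeff a b c (Suc n) * z ^ Suc n)) \<le> q * norm (norm (gauss_coeff a b c n * z ^ n))"
      by (simp add: mult_right_mono mult.commute)
  qed
qed

lemma gauss_series_sums:
  "norm z < 1 \<Longrightarrow> (\<lambda>n. gauss_coeff a b c n * z ^ n) sums hyp_series [a, b] [c] z"
  using summable_norm_cancel[OF summable_norm_gauss_series]
  by (simp add: hyp_series_def hyp_coeff_gauss summable_sums)

definition gauss_fps :: "complex \<Rightarrow> complex \<Rightarrow> complex \<Rightarrow> complex fps" where
  "gauss_fps a b c = Abs_fps (gauss_coeff a b c)"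

lemma gauss_fps_conv_radius: "fps_conv_radius (gauss_fps a b c) \<ge> 1"
proof -
  have "conv_radius (gauss_coeff a b c) \<ge> 1"
  proof (rule conv_radius_geI_ex')
    fix r :: real assume "0 < r" "ereal r < 1"
    hence "norm (of_real r :: complex) < 1" by simp
    from summable_norm_cancel[OF summable_norm_gauss_series[OF this]]
    show "summable (\<lambda>n. gauss_coeff a b c n * of_real r ^ n)" .
  qed
  thus ?thesis by (simp add: fps_conv_radius_def gauss_fps_def)
qed

lemma norm_less_gauss_fps_conv_radius:
  "norm z < 1 \<Longrightarrow> ereal (norm z) < fps_conv_radius (gauss_fps a b c)"
  using gauss_fps_conv_radius[of a b c] by (meson ereal_less(3) less_le_trans less_ereal.simps(1))

lemma hyp_series_gauss: "hyp_series [a, b] [c] z = eval_fps (gauss_fps a b c) z"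
  by (simp add: hyp_series_def eval_fps_def gauss_fps_def hyp_coeff_gauss)

lemma hyp_continuation_gauss_eval:
  assumes "hyp_continuation [a, b] [c] G" "norm z < 1"
  shows "G z = eval_fps (gauss_fps a b c) z"
    and "deriv G z = eval_fps (fps_deriv (gauss_fps a b c)) z"
proof -
  show "G z = eval_fps (gauss_fps a b c) z"
    using assms by (simp add: hyp_continuation_def hyp_series_gauss)
  note has_field_derivative_eval_fps[OF norm_less_gauss_fps_conv_radius[OF assms(2)]]
  hence "(G has_field_derivative eval_fps (fps_deriv (gauss_fps a b c)) z) (at z)"
  proof (rule has_field_derivative_transform_within_open[of _ _ _ "ball 0 1"])
    show "eval_fps (gauss_fps a b c) x = G x" if "x \<in> ball 0 1" for x
      using assms(1) that by (simp add: hyp_continuation_def hyp_series_gauss)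
  qed (use assms in auto)
  thus "deriv G z = eval_fps (fps_deriv (gauss_fps a b c)) z" by (rule DERIV_imp_deriv)
qed

lemma hyp_continuation_sum:
  assumes G: "\<And>k. hyp_continuation [a, \<beta> k] [c] (G k)"
    and coeff: "\<And>n. hyp_coeff as bs n = (\<Sum>k\<le>M. w k * gauss_coeff a (\<beta> k) c n)"
  shows "hyp_continuation as bs (\<lambda>x. \<Sum>k\<le>M. w k * G k x)"
  unfolding hyp_continuation_def
proof safe
  show "(\<lambda>x. \<Sum>k\<le>M. w k * G k x) holomorphic_on cut_plane"
    using G by (intro holomorphic_intros) (auto simp: hyp_continuation_def)
next
  fix z :: complex assume z: "norm z < 1"
  have "(\<lambda>n. w k * (gauss_coeff a (\<beta> k) c n * z ^ n)) sums (w k * G k z)" for k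
    using sums_mult[OF gauss_series_sums[OF z]] G[of k] z by (simp add: hyp_continuation_def)
  hence "(\<lambda>n. \<Sum>k\<le>M. w k * (gauss_coeff a (\<beta> k) c n * z ^ n)) sums (\<Sum>k\<le>M. w k * G k z)"
    by (rule sums_sum)
  hence "(\<lambda>n. hyp_coeff as bs n * z ^ n) sums (\<Sum>k\<le>M. w k * G k z)"
    by (simp add: coeff sum_distrib_right mult.assoc)
  thus "(\<Sum>k\<le>M. w k * G k z) = hyp_series as bs z"
    by (simp add: hyp_series_def sums_iff)
qed

section \<open>Contiguous relations\<close>

lemma gauss_coeff_lower_c:
  assumes "c \<notin> \<int>\<^sub>\<le>\<^sub>0" "c \<noteq> 1"
  shows "gauss_coeff a b (c - 1) n = gauss_coeff a b c n * (1 + of_nat n / (c - 1))"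
proof -
  have c1: "c - 1 \<notin> \<int>\<^sub>\<le>\<^sub>0" using assms by (rule minus_one_notin_nonpos_Ints)
  have rec: "pochhammer c n * (c - 1) = (c - 1 + of_nat n) * pochhammer (c - 1) n"
    using pochhammer_rec[of "c - 1" n] pochhammer_rec'[of "c - 1" n] by (simp add: mult.commute)
  have nz: "c - 1 \<noteq> 0" "c - 1 + of_nat n \<noteq> 0" "pochhammer (c - 1) n \<noteq> 0"
    using assms c1 pochhammer_neq_0_if_notin_nonpos_Ints add_of_nat_neq_0_if_notin_nonpos_Ints by auto
  have "gauss_coeff a b c n * (1 + of_nat n / (c - 1)) =
          pochhammer a n * pochhammer b n * (c - 1 + of_nat n) / (pochhammer c n * (c - 1) * fact n)"
    using nz by (simp add: gauss_coeff_def field_simps)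
  also have "\<dots> = pochhammer a n * pochhammer b n * (c - 1 + of_nat n) /
                     ((c - 1 + of_nat n) * (pochhammer (c - 1) n * fact n))"
    by (simp only: rec mult.assoc)
  also have "\<dots> = gauss_coeff a b (c - 1) n" using nz by (simp add: gauss_coeff_def)
  finally show ?thesis ..
qed

lemma gauss_coeff_lower_b:
  assumes "c \<notin> \<int>\<^sub>\<le>\<^sub>0"
  shows "(c - b) * gauss_coeff a (b - 1) c (Suc k) =
           (c - b + of_nat (Suc k)) * gauss_coeff a b c (Suc k) - (a + of_nat k) * gauss_coeff a b c k"
proof -
  define X where "X = gauss_coeff a b c k"
  define D where "D = (c + of_nat k) * (of_nat k + 1)"
  have "D \<noteq> 0"
    using add_of_nat_neq_0_if_notin_nonpos_Ints[OF assms, of k] of_nat_neq_0[of k, where 'a=complex]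
    by (simp add: D_def add.commute)
  have step: "gauss_coeff a (b - 1) c (Suc k) = X * (a + of_nat k) * (b - 1) / D"
    unfolding X_def D_def gauss_coeff_def pochhammer_rec'[of a k] pochhammer_rec[of "b - 1" k]
      pochhammer_rec'[of c k] fact_Suc
    by (simp add: field_simps)
  have key: "(c - b) * (b - 1) = (c - b + of_nat (Suc k)) * (b + of_nat k) - D"
    by (simp add: D_def algebra_simps)
  have "(c - b) * gauss_coeff a (b - 1) c (Suc k) = X * (a + of_nat k) * ((c - b) * (b - 1)) / D"
    by (simp add: step mult_ac)
  also have "\<dots> = X * (a + of_nat k) * ((c - b + of_nat (Suc k)) * (b + of_nat k)) / D - X * (a + of_nat k)"
    unfolding key using \<open>D \<noteq> 0\<close> by (simp add: field_simps)
  also have "\<dots> = (c - b + of_nat (Suc k)) * gauss_coeff a b c (Suc k) - (a + of_nat k) * gauss_coeff a b c k"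
    by (simp add: gauss_coeff_Suc X_def D_def mult_ac)
  finally show ?thesis .
qed

lemma gauss_fps_lower_c:
  assumes "c \<notin> \<int>\<^sub>\<le>\<^sub>0" "c \<noteq> 1"
  shows "gauss_fps a b (c - 1) =
           gauss_fps a b c + fps_const (1 / (c - 1)) * (fps_X * fps_deriv (gauss_fps a b c))"
  by (intro fps_ext) (simp add: gauss_fps_def gauss_coeff_lower_c[OF assms] field_simps split: nat.split)

lemma gauss_fps_lower_b:
  fixes a b c :: complex
  assumes "c \<notin> \<int>\<^sub>\<le>\<^sub>0"
  defines "F \<equiv> gauss_fps a b c"
  shows "fps_const (c - b) * gauss_fps a (b - 1) c =
           fps_const (c - b) * F - fps_const a * (fps_X * F) +
           fps_X * fps_deriv F - fps_X * (fps_X * fps_deriv F)"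
proof (rule fps_ext)
  fix n
  show "(fps_const (c - b) * gauss_fps a (b - 1) c) $ n =
          (fps_const (c - b) * F - fps_const a * (fps_X * F) +
           fps_X * fps_deriv F - fps_X * (fps_X * fps_deriv F)) $ n"
  proof (cases n)
    case (Suc k)
    thus ?thesis using gauss_coeff_lower_b[OF assms(1), of b a k]
      by (cases k) (simp_all add: F_def gauss_fps_def algebra_simps)
  qed (simp add: F_def gauss_fps_def)
qed

lemma less_fps_conv_radius_mult:
  "r < fps_conv_radius f \<Longrightarrow> r < fps_conv_radius g \<Longrightarrow> r < fps_conv_radius (f * g)"
  by (rule less_le_trans[OF _ fps_conv_radius_mult]) simp

lemma less_fps_conv_radius_add:
  "r < fps_conv_radius f \<Longrightarrow> r < fps_conv_radius g \<Longrightarrow> r < fps_conv_radius (f + g)"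
  by (rule less_le_trans[OF _ fps_conv_radius_add]) simp

lemma less_fps_conv_radius_diff:
  "r < fps_conv_radius f \<Longrightarrow> r < fps_conv_radius g \<Longrightarrow> r < fps_conv_radius (f - g)"
  by (rule less_le_trans[OF _ fps_conv_radius_diff]) simp

lemma hyp_continuation_lower_c:
  assumes G: "hyp_continuation [a, b] [c] G" and c: "c \<notin> \<int>\<^sub>\<le>\<^sub>0" "c \<noteq> 1"
  shows "hyp_continuation [a, b] [c - 1] (\<lambda>x. G x + x * deriv G x / (c - 1))"
  unfolding hyp_continuation_def
proof safe
  have "G holomorphic_on cut_plane" using G by (simp add: hyp_continuation_def)
  thus "(\<lambda>x. G x + x * deriv G x / (c - 1)) holomorphic_on cut_plane"
    using c(2) by (intro holomorphic_intros holomorphic_deriv open_cut_plane) auto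
next
  fix z :: complex assume z: "norm z < 1"
  note R = less_fps_conv_radius_mult less_fps_conv_radius_add norm_less_gauss_fps_conv_radius[OF z]
    less_le_trans[OF norm_less_gauss_fps_conv_radius[OF z] fps_conv_radius_deriv]
  have "hyp_series [a, b] [c - 1] z =
          eval_fps (gauss_fps a b c) z + z * eval_fps (fps_deriv (gauss_fps a b c)) z / (c - 1)"
    unfolding hyp_series_gauss gauss_fps_lower_c[OF c] by (simp add: eval_fps_add eval_fps_mult R)
  thus "G z + z * deriv G z / (c - 1) = hyp_series [a, b] [c - 1] z"
    using hyp_continuation_gauss_eval[OF G z] by simp
qed

lemma hyp_continuation_lower_b:
  assumes G: "hyp_continuation [a, b] [c] G" and c: "c \<notin> \<int>\<^sub>\<le>\<^sub>0" and cb: "c \<noteq> b"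
  shows "hyp_continuation [a, b - 1] [c]
           (\<lambda>x. ((c - b - a * x) * G x + x * (1 - x) * deriv G x) / (c - b))"
  unfolding hyp_continuation_def
proof safe
  have "G holomorphic_on cut_plane" using G by (simp add: hyp_continuation_def)
  thus "(\<lambda>x. ((c - b - a * x) * G x + x * (1 - x) * deriv G x) / (c - b)) holomorphic_on cut_plane"
    using cb by (intro holomorphic_intros holomorphic_deriv open_cut_plane) auto
next
  fix z :: complex assume z: "norm z < 1"
  note R = less_fps_conv_radius_mult less_fps_conv_radius_add less_fps_conv_radius_diff
    norm_less_gauss_fps_conv_radius[OF z]
    less_le_trans[OF norm_less_gauss_fps_conv_radius[OF z] fps_conv_radius_deriv]
  have "(c - b) * hyp_series [a, b - 1] [c] z = eval_fps (fps_const (c - b) * gauss_fps a (b - 1) c) z"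
    by (simp add: eval_fps_mult hyp_series_gauss R)
  also have "\<dots> = (c - b - a * z) * eval_fps (gauss_fps a b c) z +
                     z * (1 - z) * eval_fps (fps_deriv (gauss_fps a b c)) z"
    unfolding gauss_fps_lower_b[OF c] by (simp add: eval_fps_add eval_fps_diff eval_fps_mult R algebra_simps)
  finally show "((c - b - a * z) * G z + z * (1 - z) * deriv G z) / (c - b) = hyp_series [a, b - 1] [c] z"
    using hyp_continuation_gauss_eval[OF G z] cb by (simp add: field_simps)
qed

section \<open>Euler's integral\<close>

lemma continuous_on_x_ln_x: "continuous_on {0..1} (\<lambda>t::real. t * ln t)"
  unfolding continuous_on_def
proof
  fix t :: real assume t: "t \<in> {0..1}"
  show "((\<lambda>t. t * ln t) \<longlongrightarrow> t * ln t) (at t within {0..1})"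
  proof (cases "t = 0")
    case True
    have "((\<lambda>t::real. t * ln t) \<longlongrightarrow> 0) (at_right 0)" by real_asymp
    thus ?thesis using True by (simp add: at_within_Icc_at_right)
  next
    case False
    with t have "isCont (\<lambda>t. t * ln t) t" by (intro continuous_intros) auto
    from continuous_at_imp_continuous_at_within[OF this] show ?thesis by (simp add: continuous_within)
  qed
qed

text \<open>The half-plane \<open>Re \<beta> > 2\<close> keeps the \<open>\<beta>\<close>-derivative \<open>t powr (\<beta> - 2) * t * ln t\<close> of
  the integrand continuous at \<open>t = 0\<close>.\<close>

lemma holomorphic_on_integral_powr:
  assumes g: "continuous_on {0..1} g"
  shows "(\<lambda>\<beta>. integral {0..1} (\<lambda>t. of_real t powr (\<beta> - 1) * g t)) holomorphic_on {\<beta>. Re \<beta> > 2}"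
proof -
  have "(\<lambda>\<beta>. integral (cbox 0 1) (\<lambda>t. of_real t powr (\<beta> - 1) * g t)) holomorphic_on {\<beta>. Re \<beta> > 2}"
  proof (rule leibniz_rule_holomorphic[where fx = "\<lambda>\<beta> t. of_real t powr (\<beta> - 2) * of_real (t * ln t) * g t"])
    fix \<beta> :: complex and t :: real
    assume t: "t \<in> cbox 0 1"
    show "((\<lambda>\<beta>. of_real t powr (\<beta> - 1) * g t) has_field_derivative
           of_real t powr (\<beta> - 2) * of_real (t * ln t) * g t) (at \<beta> within {\<beta>. Re \<beta> > 2})"
    proof (cases "t = 0")
      case False
      with t have "t > 0" by auto
      have "((\<lambda>\<beta>. of_real t powr (\<beta> - 1)) has_field_derivative
              Ln (of_real t) * of_real t powr (\<beta> - 1) * 1) (at \<beta>)"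
        by (rule DERIV_chain2[OF has_field_derivative_powr_right])
          (use \<open>t > 0\<close> in \<open>auto intro!: derivative_eq_intros\<close>)
      hence "((\<lambda>\<beta>. of_real t powr (\<beta> - 1) * g t) has_field_derivative
              Ln (of_real t) * of_real t powr (\<beta> - 1) * g t) (at \<beta>)"
        using DERIV_cmult_right by fastforce
      moreover have "of_real t powr (\<beta> - 1) = of_real t powr (\<beta> - 2) * (of_real t :: complex)"
        using powr_add[of "of_real t :: complex" "\<beta> - 2" 1] \<open>t > 0\<close> by simp
      ultimately show ?thesis
        using \<open>t > 0\<close> by (simp add: Ln_of_real mult_ac has_field_derivative_at_within)
    qed (simp add: powr_def)
  next
    fix \<beta> :: complex assume "\<beta> \<in> {\<beta>. Re \<beta> > 2}"
    hence "continuous_on {0..1} (\<lambda>t::real. of_real t powr (\<beta> - 1) * g t)"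
      by (intro continuous_intros g) auto
    thus "(\<lambda>t. of_real t powr (\<beta> - 1) * g t) integrable_on cbox 0 1"
      by (simp add: integrable_continuous_interval)
  next
    have "continuous_on ({\<beta>. Re \<beta> > 2} \<times> cbox 0 1)
            (\<lambda>p::complex \<times> real. of_real (snd p) powr (fst p - 2) * of_real (snd p * ln (snd p)) * g (snd p))"
      by (intro continuous_intros continuous_on_of_real continuous_on_compose2[OF continuous_on_x_ln_x]
            continuous_on_compose2[OF g]) auto
    thus "continuous_on ({\<beta>. Re \<beta> > 2} \<times> cbox 0 1) (\<lambda>(\<beta>, t). of_real t powr (\<beta> - 2) * of_real (t * ln t) * g t)"
      by (simp add: case_prod_unfold)
  qed (rule convex_halfspace_Re_gt)
  thus ?thesis by simp
qed

lemma integral_reflect_01: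
  fixes h :: "real \<Rightarrow> 'a::euclidean_space"
  assumes "h integrable_on {0..1}"
  shows "integral {0..1} (\<lambda>t. h (1 - t)) = integral {0..1} h"
proof -
  have "((\<lambda>x. h ((-1) * x + 1)) has_integral (1 / \<bar>-1\<bar>) *\<^sub>R integral {0..1} h)
          ((\<lambda>x. x / (-1) - 1 / (-1)) ` {0..1})"
    by (rule has_integral_affinity01[OF integrable_integral[OF assms]]) simp
  moreover have "(\<lambda>x::real. x / (-1) - 1 / (-1)) ` {0..1} = {0..1}"
    by (auto simp: image_iff intro!: bexI[of _ "1 - _"])
  ultimately show ?thesis by (simp add: integral_unique)
qed

lemma eq_0_on_half_plane_if_eq_0_on_reals:
  assumes "f holomorphic_on {z. Re z > 2}" "\<And>s. s > 2 \<Longrightarrow> f (of_real s) = 0" "Re z > 2"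
  shows "f z = 0"
proof (rule analytic_continuation[of f "{z. Re z > 2}" "of_real ` {2<..}" 3])
  show "(3::complex) islimpt of_real ` {2<..}"
  proof (rule islimpt_approachable[THEN iffD2], intro allI impI)
    fix e :: real assume "e > 0"
    define d where "d = min e 1 / 2"
    have "d > 0" "d < e" using \<open>e > 0\<close> by (auto simp: d_def)
    have "complex_of_real (3 + d) \<in> of_real ` {2<..}"
      using \<open>d > 0\<close> by (intro imageI) simp
    moreover have "dist (complex_of_real (3 + d)) (complex_of_real 3) = d"
      using \<open>d > 0\<close> by (simp only: dist_of_real) (simp add: dist_real_def)
    ultimately show "\<exists>x'\<in>(of_real ` {2<..} :: complex set). x' \<noteq> 3 \<and> dist x' 3 < e"
      using \<open>d > 0\<close> \<open>d < e\<close> by (metis dist_eq_0_iff of_real_numeral order_less_irrefl)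
  qed
qed (use assms in \<open>auto intro: open_halfspace_Re_gt convex_connected convex_halfspace_Re_gt\<close>)

lemma integral_Beta_of_real:
  assumes "s > 0" "u > (0::real)"
  shows "integral {0..1} (\<lambda>t. of_real t powr (of_real s - 1) * of_real (1 - t) powr (of_real u - 1) :: complex)
         = Beta (of_real s) (of_real u)"
proof -
  have "((\<lambda>t. complex_of_real (t powr (s - 1) * (1 - t) powr (u - 1))) has_integral of_real (Beta s u)) {0..1}"
    using has_integral_linear[OF has_integral_Beta_real[OF assms] bounded_linear_of_real]
    by (simp add: o_def)
  moreover have "complex_of_real (t powr (s - 1) * (1 - t) powr (u - 1)) =
      of_real t powr (of_real s - 1) * of_real (1 - t) powr (of_real u - 1)" if "t \<in> {0..1}" for t
    using that powr_of_real[of t "s - 1"] powr_of_real[of "1 - t" "u - 1"] by simp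
  ultimately show ?thesis
    by (subst (asm) has_integral_cong) (auto simp: integral_unique Beta_complex_of_real)
qed

lemma has_integral_Beta_complex:
  assumes \<beta>: "Re \<beta> > 2" and \<gamma>: "Re \<gamma> > 2"
  shows "((\<lambda>t. of_real t powr (\<beta> - 1) * of_real (1 - t) powr (\<gamma> - 1)) has_integral Beta \<beta> \<gamma>) {0..1}"
proof -
  define J :: "complex \<Rightarrow> complex \<Rightarrow> complex" where
    "J = (\<lambda>\<beta> \<gamma>. integral {0..1} (\<lambda>t::real. of_real t powr (\<beta> - 1) * of_real (1 - t) powr (\<gamma> - 1)))"
  have cont: "continuous_on {0..1} (\<lambda>t::real. of_real (1 - t) powr (\<gamma>' - 1) :: complex)" if "Re \<gamma>' > 2" for \<gamma>'
    using that by (intro continuous_intros) auto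
  have J_sym: "J \<beta>' \<gamma>' = integral {0..1} (\<lambda>t::real. of_real t powr (\<gamma>' - 1) * of_real (1 - t) powr (\<beta>' - 1))"
    if "Re \<beta>' > 2" "Re \<gamma>' > 2" for \<beta>' \<gamma>'
    unfolding J_def using that
    by (subst integral_reflect_01[symmetric]) (auto simp: mult.commute intro!: integrable_continuous_interval continuous_intros)
  have J_Beta_real: "J \<beta>' (of_real u) = Beta \<beta>' (of_real u)" if \<beta>': "Re \<beta>' > 2" and u: "u > 2" for \<beta>' u
  proof -
    have "(\<lambda>\<beta>. J \<beta> (of_real u)) holomorphic_on {z. Re z > 2}"
      unfolding J_def by (rule holomorphic_on_integral_powr[OF cont]) (use u in simp)
    moreover have "(\<lambda>\<beta>. Beta \<beta> (of_real u)) holomorphic_on {z. Re z > 2}"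
      using u by (intro holomorphic_intros re_gt_0_notin_nonpos_Ints) auto
    moreover have "J (of_real s) (of_real u) = Beta (of_real s) (of_real u)" if "s > 2" for s
      unfolding J_def using integral_Beta_of_real[of s u] that u by simp
    ultimately show ?thesis
      using eq_0_on_half_plane_if_eq_0_on_reals[of "\<lambda>\<beta>. J \<beta> (of_real u) - Beta \<beta> (of_real u)" \<beta>'] \<beta>'
      by (simp add: holomorphic_on_diff)
  qed
  have "(\<lambda>\<gamma>. J \<beta> \<gamma>) holomorphic_on {z. Re z > 2}"
    by (subst holomorphic_cong[OF refl J_sym]) (use \<beta> holomorphic_on_integral_powr[OF cont[OF \<beta>]] in auto)
  moreover have "(\<lambda>\<gamma>. Beta \<beta> \<gamma>) holomorphic_on {z. Re z > 2}"
    using \<beta> by (intro holomorphic_intros re_gt_0_notin_nonpos_Ints) auto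
  ultimately have "J \<beta> \<gamma> = Beta \<beta> \<gamma>"
    using eq_0_on_half_plane_if_eq_0_on_reals[of "\<lambda>\<gamma>. J \<beta> \<gamma> - Beta \<beta> \<gamma>" \<gamma>] \<beta> \<gamma> J_Beta_real
    by (simp add: holomorphic_on_diff)
  moreover have "(\<lambda>t::real. of_real t powr (\<beta> - 1) * of_real (1 - t) powr (\<gamma> - 1)) integrable_on {0..1}"
    using \<beta> \<gamma> by (intro integrable_continuous_interval continuous_intros) auto
  ultimately show ?thesis unfolding J_def using integrable_integral by force
qed

definition euler_kernel :: "complex \<Rightarrow> complex \<Rightarrow> real \<Rightarrow> complex" where
  "euler_kernel b c t = of_real t powr (b - 1) * of_real (1 - t) powr (c - b - 1)"

definition euler_integral :: "complex \<Rightarrow> complex \<Rightarrow> complex \<Rightarrow> complex \<Rightarrow> complex" where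
  "euler_integral a b c x = integral {0..1} (\<lambda>t. euler_kernel b c t * (1 - x * of_real t) powr (-a))"

lemma continuous_on_euler_kernel:
  assumes "Re b > 2" "Re (c - b) > 2"
  shows "continuous_on {0..1} (euler_kernel b c)"
  unfolding euler_kernel_def using assms by (intro continuous_intros) auto

lemma holomorphic_on_euler_integral_convex:
  assumes b: "Re b > 2" "Re (c - b) > 2" and U: "convex U" "U \<subseteq> cut_plane"
  shows "euler_integral a b c holomorphic_on U"
proof -
  have w: "continuous_on {0..1} (euler_kernel b c)" by (rule continuous_on_euler_kernel[OF b])
  have base: "1 - x * of_real t \<notin> \<real>\<^sub>\<le>\<^sub>0" if "x \<in> U" "t \<in> cbox 0 1" for x t
    using that U one_minus_mult_of_real_notin_nonpos_Reals[of x t] by auto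
  have "(\<lambda>x. integral (cbox 0 1) (\<lambda>t. euler_kernel b c t * (1 - x * of_real t) powr (-a))) holomorphic_on U"
  proof (rule leibniz_rule_holomorphic[where fx = "\<lambda>x t. euler_kernel b c t * ((-a) * (1 - x * of_real t) powr (-a - 1) * (- of_real t))"])
    fix x t assume xt: "x \<in> U" "t \<in> cbox 0 (1::real)"
    have "((\<lambda>x. (1 - x * of_real t) powr (-a)) has_field_derivative
             (-a) * (1 - x * of_real t) powr (-a - 1) * (- of_real t)) (at x)"
      by (rule DERIV_chain2[where g = "\<lambda>x. 1 - x * of_real t" and x = x, OF has_field_derivative_powr[OF base[OF xt]]])
        (auto intro!: derivative_eq_intros)
    thus "((\<lambda>x. euler_kernel b c t * (1 - x * of_real t) powr (-a)) has_field_derivative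
            euler_kernel b c t * ((-a) * (1 - x * of_real t) powr (-a - 1) * (- of_real t))) (at x within U)"
      by (rule has_field_derivative_at_within[OF DERIV_cmult])
  next
    fix x assume "x \<in> U"
    hence "continuous_on {0..1} (\<lambda>t. euler_kernel b c t * (1 - x * of_real t) powr (-a))"
      using base by (intro continuous_on_mult w continuous_on_powr_notin_nonpos_Reals continuous_intros) auto
    thus "(\<lambda>t. euler_kernel b c t * (1 - x * of_real t) powr (-a)) integrable_on cbox 0 1"
      by (simp add: integrable_continuous_interval)
  next
    have k: "continuous_on (U \<times> cbox 0 1) (\<lambda>p::complex \<times> real. euler_kernel b c (snd p))"
      by (intro continuous_on_compose2[OF w] continuous_intros) auto
    have p: "continuous_on (U \<times> cbox 0 1) (\<lambda>p::complex \<times> real. (1 - fst p * of_real (snd p)) powr (-a - 1))"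
      using base by (intro continuous_on_powr_notin_nonpos_Reals continuous_intros) auto
    have q: "continuous_on (U \<times> cbox 0 1) (\<lambda>p::complex \<times> real. - complex_of_real (snd p))"
      by (intro continuous_intros)
    from continuous_on_mult[OF k continuous_on_mult[OF continuous_on_mult[OF continuous_on_const[of _ "-a"] p] q]]
    show "continuous_on (U \<times> cbox 0 1)
            (\<lambda>(x, t). euler_kernel b c t * ((-a) * (1 - x * of_real t) powr (-a - 1) * (- of_real t)))"
      by (simp add: case_prod_unfold)
  qed (rule U)
  thus ?thesis unfolding euler_integral_def[abs_def] by simp
qed

lemma holomorphic_on_euler_integral:
  assumes "Re b > 2" "Re (c - b) > 2"
  shows "euler_integral a b c holomorphic_on cut_plane"
proof -
  have "euler_integral a b c analytic_on cut_plane"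
    unfolding analytic_on_def
  proof
    fix x assume "x \<in> cut_plane"
    then obtain e where "e > 0" "ball x e \<subseteq> cut_plane"
      using open_cut_plane by (auto simp: open_contains_ball)
    thus "\<exists>e>0. euler_integral a b c holomorphic_on ball x e"
      using holomorphic_on_euler_integral_convex[OF assms convex_ball] by blast
  qed
  thus ?thesis by (rule analytic_imp_holomorphic)
qed

lemma norm_of_real_powr_le_1:
  assumes "0 \<le> t" "t \<le> 1" "Re z \<ge> 0"
  shows "norm (of_real t powr z :: complex) \<le> 1"
proof -
  have "norm (of_real t powr z :: complex) = t powr Re z"
    using assms by (subst norm_powr_real_powr) auto
  also have "\<dots> \<le> 1 powr Re z" using assms by (intro powr_mono2) auto
  finally show ?thesis by simp
qed

lemma norm_euler_kernel_le_1:
  assumes "Re b > 2" "Re (c - b) > 2" "t \<in> {0..1}"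
  shows "norm (euler_kernel b c t) \<le> 1"
  using assms mult_mono[OF norm_of_real_powr_le_1[of t "b - 1"] norm_of_real_powr_le_1[of "1 - t" "c - b - 1"]]
  by (simp add: euler_kernel_def norm_mult)

lemma euler_kernel_mult_power:
  assumes "t \<in> {0..1}"
  shows "euler_kernel b c t * of_real t ^ n =
           of_real t powr (b + of_nat n - 1) * of_real (1 - t) powr (c - b - 1)"
proof (cases "t = 0")
  case False
  have "of_real t powr (b + of_nat n - 1) = of_real t powr ((b - 1) + of_nat n)"
    by (simp add: algebra_simps)
  also have "\<dots> = of_real t powr (b - 1) * (of_real t ^ n :: complex)"
    using assms False by (simp add: powr_add powr_nat')
  finally have "of_real t powr (b + of_nat n - 1) = of_real t powr (b - 1) * (of_real t ^ n :: complex)" .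
  thus ?thesis by (simp add: euler_kernel_def mult_ac)
qed (simp add: euler_kernel_def powr_def)

lemma gbinomial_uminus_mult_power:
  "((-a) gchoose n) * (-x) ^ n = gauss_coeff a 1 1 n * x ^ n"
proof -
  have "((-a) gchoose n) * (-x) ^ n = ((-1) ^ n * (-1) ^ n) * (pochhammer a n / fact n * x ^ n)"
    by (simp add: gbinomial_pochhammer power_minus[of x] mult_ac)
  thus ?thesis by (simp add: gauss_coeff_def pochhammer_fact power_mult_distrib[symmetric])
qed

lemma Beta_add_of_nat_left:
  assumes "b \<notin> \<int>\<^sub>\<le>\<^sub>0" "c \<notin> \<int>\<^sub>\<le>\<^sub>0"
  shows "Beta (b + of_nat n) (c - b) = Beta b (c - b) * (pochhammer b n / pochhammer c n)"
proof -
  have "Gamma b \<noteq> 0" "Gamma c \<noteq> 0" "pochhammer c n \<noteq> 0"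
    using assms by (auto simp: Gamma_eq_zero_iff pochhammer_neq_0_if_notin_nonpos_Ints)
  moreover have "b + of_nat n + (c - b) = c + of_nat n" by simp
  ultimately show ?thesis
    using pochhammer_Gamma[OF assms(1), of n] pochhammer_Gamma[OF assms(2), of n]
    by (simp add: Beta_def field_simps)
qed

lemma has_integral_euler_kernel_power:
  assumes "Re b > 2" "Re (c - b) > 2"
  shows "((\<lambda>t. euler_kernel b c t * of_real t ^ n) has_integral
           Beta b (c - b) * (pochhammer b n / pochhammer c n)) {0..1}"
proof -
  have "((\<lambda>t. of_real t powr (b + of_nat n - 1) * of_real (1 - t) powr (c - b - 1)) has_integral
          Beta (b + of_nat n) (c - b)) {0..1}"
    using has_integral_Beta_complex[of "b + of_nat n" "c - b"] assms by simp
  moreover have "b \<notin> \<int>\<^sub>\<le>\<^sub>0" "c \<notin> \<int>\<^sub>\<le>\<^sub>0"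
    using assms re_gt_0_notin_nonpos_Ints[of b] re_gt_0_notin_nonpos_Ints[of c] by auto
  ultimately show ?thesis
    by (subst has_integral_cong[OF euler_kernel_mult_power]) (auto simp: Beta_add_of_nat_left)
qed

text \<open>The binomial series of \<open>(1 - x t) powr (-a)\<close> is dominated, uniformly in \<open>t \<in> [0, 1]\<close>,
  by the absolutely convergent series \<open>\<Sum>n. |(a)_n / n! x^n|\<close>, so it can be integrated termwise.\<close>

lemma euler_integral_sums:
  assumes b: "Re b > 2" "Re (c - b) > 2" and x: "norm x < 1"
  shows "(\<lambda>n. Beta b (c - b) * (gauss_coeff a b c n * x ^ n)) sums euler_integral a b c x"
proof -
  define \<phi> where "\<phi> = (\<lambda>n t. euler_kernel b c t * (((-a) gchoose n) * (-(x * of_real t)) ^ n))"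
  have \<phi>: "\<phi> n = (\<lambda>t. gauss_coeff a 1 1 n * x ^ n * (euler_kernel b c t * of_real t ^ n))" for n
    by (simp add: fun_eq_iff \<phi>_def gbinomial_uminus_mult_power power_mult_distrib mult_ac)
  have bound: "norm (\<phi> n t) \<le> norm (gauss_coeff a 1 1 n * x ^ n)" if t: "t \<in> {0..1}" for n t
  proof -
    have "norm (\<phi> n t) = norm (gauss_coeff a 1 1 n * x ^ n) * (norm (euler_kernel b c t) * \<bar>t\<bar> ^ n)"
      by (simp add: \<phi> norm_mult norm_power)
    also have "\<dots> \<le> norm (gauss_coeff a 1 1 n * x ^ n) * (1 * 1)"
      using t norm_euler_kernel_le_1[OF b t] by (intro mult_left_mono mult_mono power_le_one) auto
    finally show ?thesis by simp
  qed
  have "uniform_limit {0..1} (\<lambda>N t. \<Sum>n<N. \<phi> n t) (\<lambda>t. \<Sum>n. \<phi> n t) sequentially"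
    by (rule Weierstrass_m_test[OF bound summable_norm_gauss_series[OF x]])
  moreover have "continuous_on {0..1} (\<lambda>t. \<Sum>n<N. \<phi> n t)" for N
    unfolding \<phi>_def by (intro continuous_intros continuous_on_euler_kernel[OF b])
  ultimately obtain I J where I: "\<And>N. ((\<lambda>t. \<Sum>n<N. \<phi> n t) has_integral I N) {0..1}"
    and J: "((\<lambda>t. \<Sum>n. \<phi> n t) has_integral J) {0..1}" and IJ: "I \<longlonglongrightarrow> J"
    by (rule uniform_limit_integral) auto
  have "(\<Sum>n. \<phi> n t) = euler_kernel b c t * (1 - x * of_real t) powr (-a)" if t: "t \<in> {0..1}" for t
  proof -
    have "norm (-(x * of_real t)) < 1"
      using t x mult_left_le[of t "norm x"] by (simp add: norm_mult)
    from sums_mult[OF gen_binomial_complex[OF this, of "-a"], of "euler_kernel b c t"]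
    show ?thesis by (simp add: \<phi>_def sums_iff)
  qed
  with J have "J = euler_integral a b c x"
    unfolding euler_integral_def by (subst (asm) has_integral_cong) (auto intro: integral_unique[symmetric])
  moreover have "I = (\<lambda>N. \<Sum>n<N. Beta b (c - b) * (gauss_coeff a b c n * x ^ n))"
  proof (rule ext, rule has_integral_unique[OF I])
    fix N
    have "(\<phi> n has_integral Beta b (c - b) * (gauss_coeff a b c n * x ^ n)) {0..1}" for n
      using has_integral_mult_right[OF has_integral_euler_kernel_power[OF b, of n], of "gauss_coeff a 1 1 n * x ^ n"]
      by (simp add: \<phi> gauss_coeff_def pochhammer_fact[symmetric] mult_ac)
    thus "((\<lambda>t. \<Sum>n<N. \<phi> n t) has_integral (\<Sum>n<N. Beta b (c - b) * (gauss_coeff a b c n * x ^ n))) {0..1}"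
      by (intro has_integral_sum) auto
  qed
  ultimately show ?thesis using IJ by (simp add: sums_def)
qed

lemma hyp_continuation_euler_integral:
  assumes "Re b > 2" "Re (c - b) > 2"
  shows "hyp_continuation [a, b] [c] (\<lambda>x. euler_integral a b c x / Beta b (c - b))"
proof -
  have "b \<notin> \<int>\<^sub>\<le>\<^sub>0" "c - b \<notin> \<int>\<^sub>\<le>\<^sub>0" "c \<notin> \<int>\<^sub>\<le>\<^sub>0"
    using assms re_gt_0_notin_nonpos_Ints[of b] re_gt_0_notin_nonpos_Ints[of "c - b"]
      re_gt_0_notin_nonpos_Ints[of c] by auto
  hence "Beta b (c - b) \<noteq> 0" by (simp add: Beta_def Gamma_eq_zero_iff)
  hence "euler_integral a b c z / Beta b (c - b) = hyp_series [a, b] [c] z" if "norm z < 1" for z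
    using sums_divide[OF euler_integral_sums[OF assms that, of a], where c = "Beta b (c - b)"]
    by (simp add: sums_unique2[OF _ gauss_series_sums[OF that]])
  thus ?thesis
    using holomorphic_on_euler_integral[OF assms] \<open>Beta b (c - b) \<noteq> 0\<close>
    by (auto simp: hyp_continuation_def intro!: holomorphic_intros)
qed

lemma ex_hyp_continuation_lower_b:
  assumes "\<exists>G. hyp_continuation [a, b + of_nat k] [c] G" "c \<notin> \<int>\<^sub>\<le>\<^sub>0" "Re b + real k < Re c"
  shows "\<exists>G. hyp_continuation [a, b] [c] G"
  using assms
proof (induction k arbitrary: b)
  case (Suc k)
  have "b + 1 + of_nat k = b + of_nat (Suc k)" by simp
  hence "\<exists>G. hyp_continuation [a, b + 1 + of_nat k] [c] G" using Suc.prems(1) by (simp add: add.assoc)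
  moreover have "Re (b + 1) + real k < Re c" using Suc.prems(3) by simp
  ultimately obtain G where "hyp_continuation [a, b + 1] [c] G"
    using Suc.IH[of "b + 1"] Suc.prems(2) by blast
  moreover have "c \<noteq> b + 1" using Suc.prems(3) by auto
  ultimately show ?case using hyp_continuation_lower_b[OF _ Suc.prems(2)] by fastforce
qed simp

lemma ex_hyp_continuation_lower_c:
  assumes "\<exists>G. hyp_continuation [a, b] [c + of_nat k] G" "c \<notin> \<int>\<^sub>\<le>\<^sub>0"
  shows "\<exists>G. hyp_continuation [a, b] [c] G"
  using assms
proof (induction k arbitrary: c)
  case (Suc k)
  have c1: "c + 1 \<notin> \<int>\<^sub>\<le>\<^sub>0" "c + 1 \<noteq> 1"
    using Suc.prems(2) add_of_nat_notin_nonpos_Ints[of c 1] by auto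
  have "c + 1 + of_nat k = c + of_nat (Suc k)" by simp
  hence "\<exists>G. hyp_continuation [a, b] [c + 1 + of_nat k] G" using Suc.prems(1) by (simp add: add.assoc)
  then obtain G where "hyp_continuation [a, b] [c + 1] G"
    using Suc.IH[of "c + 1"] c1(1) by blast
  thus ?case using hyp_continuation_lower_c[OF _ c1] by fastforce
qed simp

lemma ex_hyp_continuation_gauss:
  assumes "c \<notin> \<int>\<^sub>\<le>\<^sub>0"
  shows "\<exists>G. hyp_continuation [a, b] [c] G"
proof -
  obtain k :: nat where k: "real k > 2 - Re b" using reals_Archimedean2 by blast
  obtain j :: nat where j: "real j > Re b + real k + 2 - Re c" using reals_Archimedean2 by blast
  have "\<exists>G. hyp_continuation [a, b + of_nat k] [c + of_nat j] G"
    using hyp_continuation_euler_integral[of "b + of_nat k" "c + of_nat j"] j k by auto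
  hence "\<exists>G. hyp_continuation [a, b] [c + of_nat j] G"
    using j by (intro ex_hyp_continuation_lower_b add_of_nat_notin_nonpos_Ints assms) auto
  thus ?thesis using assms by (rule ex_hyp_continuation_lower_c)
qed

section \<open>Pfaff's transformation\<close>

lemma norm_pochhammer_add_of_nat_le:
  fixes a :: complex
  shows "norm (pochhammer (a + of_nat n) j) \<le> pochhammer (norm a + real n) j"
proof -
  have "norm (pochhammer (a + of_nat n) j) = (\<Prod>i = 0..<j. norm (a + of_nat n + of_nat i))"
    by (simp add: pochhammer_prod prod_norm)
  also have "\<dots> \<le> (\<Prod>i = 0..<j. norm a + real n + real i)"
  proof (rule prod_mono)
    fix i
    have "norm (a + of_nat n + of_nat i) \<le> norm a + norm (of_nat n :: complex) + norm (of_nat i :: complex)"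
      by (meson norm_triangle_ineq add_mono order_trans order_refl)
    thus "0 \<le> norm (a + of_nat n + of_nat i) \<and> norm (a + of_nat n + of_nat i) \<le> norm a + real n + real i"
      by simp
  qed
  also have "\<dots> = pochhammer (norm a + real n) j" by (simp add: pochhammer_prod)
  finally show ?thesis .
qed

lemma binomial_real_sums:
  assumes "0 \<le> r" "r < (1::real)"
  shows "(\<lambda>j. pochhammer A j / fact j * r ^ j) sums (1 - r) powr (-A)"
proof -
  have "((-A) gchoose j) * (-r) ^ j = pochhammer A j / fact j * r ^ j" for j
  proof -
    have "((-A) gchoose j) * (-r) ^ j = ((-1) ^ j * (-1) ^ j) * (pochhammer A j / fact j * r ^ j)"
      by (simp add: gbinomial_pochhammer power_minus[of r] mult_ac)
    thus ?thesis by (simp add: power_mult_distrib[symmetric])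
  qed
  moreover have "\<bar>-r\<bar> < 1" using assms by simp
  ultimately show ?thesis using gen_binomial_real[of "-r" "-A"] by simp
qed

text \<open>The \<open>n\<close>-th term of the right-hand side of Pfaff's transformation, with the factor
  \<open>(1 - x) powr (-a - n)\<close> expanded in its binomial series.\<close>

definition pfaff_term :: "complex \<Rightarrow> complex \<Rightarrow> complex \<Rightarrow> complex \<Rightarrow> nat \<Rightarrow> nat \<Rightarrow> complex" where
  "pfaff_term a b c x n j = gauss_coeff a (c - b) c n * (-x) ^ n * (((-a - of_nat n) gchoose j) * (-x) ^ j)"

lemma norm_pfaff_term_le:
  "norm (pfaff_term a b c x n j) \<le>
     norm (gauss_coeff a (c - b) c n) * norm x ^ n * (pochhammer (norm a + real n) j / fact j * norm x ^ j)"
proof -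
  have "(-a - of_nat n) gchoose j = (-1) ^ j * pochhammer (a + of_nat n) j / fact j"
    by (simp add: gbinomial_pochhammer algebra_simps)
  hence "norm ((-a - of_nat n) gchoose j) = norm (pochhammer (a + of_nat n) j) / fact j"
    by (simp add: norm_mult norm_divide norm_power)
  also have "\<dots> \<le> pochhammer (norm a + real n) j / fact j"
    by (intro divide_right_mono norm_pochhammer_add_of_nat_le) auto
  finally have "norm ((-a - of_nat n) gchoose j) \<le> pochhammer (norm a + real n) j / fact j" .
  hence "norm (gauss_coeff a (c - b) c n) * norm x ^ n * (norm ((-a - of_nat n) gchoose j) * norm x ^ j) \<le>
         norm (gauss_coeff a (c - b) c n) * norm x ^ n * (pochhammer (norm a + real n) j / fact j * norm x ^ j)"
    by (intro mult_left_mono mult_right_mono) auto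
  thus ?thesis by (simp add: pfaff_term_def norm_mult norm_power)
qed

lemma pfaff_term_row_has_sum:
  assumes "norm x < 1"
  shows "((\<lambda>j. pfaff_term a b c x n j) has_sum
           (1 - x) powr (-a) * (gauss_coeff a (c - b) c n * (x / (x - 1)) ^ n)) UNIV"
proof -
  have "x \<noteq> 1" using assms by auto
  have "norm (-x) < 1" using assms by simp
  from gen_binomial_complex[OF this, of "-a - of_nat n"]
  have "(\<lambda>j. ((-a - of_nat n) gchoose j) * (-x) ^ j) sums (1 - x) powr (-a - of_nat n)" by simp
  hence sums: "(\<lambda>j. pfaff_term a b c x n j) sums
                 (gauss_coeff a (c - b) c n * (-x) ^ n * (1 - x) powr (-a - of_nat n))"
    unfolding pfaff_term_def by (rule sums_mult)
  have "summable (\<lambda>j. norm (gauss_coeff a (c - b) c n) * norm x ^ n *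
                       (pochhammer (norm a + real n) j / fact j * norm x ^ j))"
    using binomial_real_sums[of "norm x" "norm a + real n"] assms
    by (intro summable_mult sums_summable) auto
  hence summable: "summable (\<lambda>j. norm (pfaff_term a b c x n j))"
    by (rule summable_comparison_test[rotated]) (metis real_norm_def abs_norm_cancel norm_pfaff_term_le)
  have "(1 - x) powr (-a - of_nat n) = (1 - x) powr (-a) / (1 - x) powr (of_nat n)"
    by (rule powr_diff)
  also have "(1 - x) powr (of_nat n) = (1 - x) ^ n" using \<open>x \<noteq> 1\<close> by (simp add: powr_nat')
  finally have "(1 - x) powr (-a - of_nat n) = (1 - x) powr (-a) / (1 - x) ^ n" .
  moreover have "x / (x - 1) = (-x) / (1 - x)" using \<open>x \<noteq> 1\<close> by (simp add: field_simps)
  hence "(x / (x - 1)) ^ n = (-x) ^ n / (1 - x) ^ n" by (simp only: power_divide)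
  ultimately have "gauss_coeff a (c - b) c n * (-x) ^ n * (1 - x) powr (-a - of_nat n) =
                     (1 - x) powr (-a) * (gauss_coeff a (c - b) c n * (x / (x - 1)) ^ n)"
    by simp
  with norm_summable_imp_has_sum[OF summable sums] show ?thesis by simp
qed

lemma abs_summable_pfaff_term:
  assumes "norm x < 1/2"
  shows "(\<lambda>(n, j). norm (pfaff_term a b c x n j)) summable_on UNIV \<times> UNIV"
proof -
  define r where "r = norm x"
  define A where "A = norm a"
  define h where "h = (\<lambda>n. norm (gauss_coeff a (c - b) c n))"
  define V where "V = (\<lambda>(n::nat, j::nat). h n * r ^ n * (pochhammer (A + real n) j / fact j * r ^ j))"
  have r: "0 \<le> r" "r < 1/2" using assms by (auto simp: r_def)
  have "0 \<le> pochhammer (A + real n) j" for n j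
    unfolding pochhammer_prod by (intro prod_nonneg) (auto simp: A_def)
  hence V_nonneg: "V p \<ge> 0" for p
    using r unfolding V_def h_def case_prod_unfold by (intro mult_nonneg_nonneg divide_nonneg_nonneg) auto
  have row: "((\<lambda>j. V (n, j)) has_sum (h n * r ^ n * (1 - r) powr (-(A + real n)))) UNIV" for n
  proof -
    have "(\<lambda>j. V (n, j)) sums (h n * r ^ n * (1 - r) powr (-(A + real n)))"
      unfolding V_def prod.case using r by (intro sums_mult binomial_real_sums) auto
    thus ?thesis using V_nonneg by (intro sums_nonneg_imp_has_sum) auto
  qed
  have "(\<lambda>n. h n * r ^ n * (1 - r) powr (-(A + real n))) summable_on UNIV"
  proof (rule summable_nonneg_imp_summable_on)
    have "h n * r ^ n * (1 - r) powr (-(A + real n)) =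
            (1 - r) powr (-A) * norm (gauss_coeff a (c - b) c n * of_real (r / (1 - r)) ^ n)" for n
    proof -
      have "(1 - r) powr (-(A + real n)) = (1 - r) powr (-A) / (1 - r) powr (real n)"
        by (simp add: powr_diff[symmetric])
      also have "(1 - r) powr (real n) = (1 - r) ^ n" using r by (simp add: powr_realpow)
      finally have "(1 - r) powr (-(A + real n)) = (1 - r) powr (-A) / (1 - r) ^ n" .
      moreover have "norm (gauss_coeff a (c - b) c n * of_real (r / (1 - r)) ^ n) = h n * (r / (1 - r)) ^ n"
        unfolding h_def by (simp only: norm_mult norm_power norm_of_real) (use r in simp)
      ultimately show ?thesis using r by (simp add: power_divide)
    qed
    moreover have "norm (of_real (r / (1 - r)) :: complex) < 1"
      using r by (simp only: norm_of_real) (simp add: field_simps)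
    ultimately show "summable (\<lambda>n. h n * r ^ n * (1 - r) powr (-(A + real n)))"
      using summable_mult[OF summable_norm_gauss_series] by presburger
  qed (use r in \<open>auto simp: h_def\<close>)
  hence "V summable_on UNIV \<times> UNIV"
    using V_nonneg by (intro summable_on_SigmaI[OF row]) auto
  thus ?thesis
    by (rule summable_on_comparison_test) (use norm_pfaff_term_le in \<open>auto simp: V_def A_def h_def r_def\<close>)
qed

lemma pfaff_term_eq_Vandermonde_summand:
  assumes c: "c \<notin> \<int>\<^sub>\<le>\<^sub>0" and n: "n \<le> N"
  shows "pfaff_term a b c x n (N - n) =
           x ^ N * (pochhammer a N / pochhammer c N) * (((b - c) gchoose n) * ((c + of_nat N - 1) gchoose (N - n)))"
proof -
  have pa: "pochhammer a N = pochhammer a n * pochhammer (a + of_nat n) (N - n)"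
    using pochhammer_product[OF n, of a] .
  have pc: "pochhammer c N = pochhammer c n * pochhammer (c + of_nat n) (N - n)"
    using pochhammer_product[OF n, of c] .
  have cn: "pochhammer c n \<noteq> 0" "pochhammer (c + of_nat n) (N - n) \<noteq> 0"
    using pochhammer_neq_0_if_notin_nonpos_Ints[OF c, of N] pc by auto
  have g1: "(-a - of_nat n) gchoose (N - n) = (-1) ^ (N - n) * pochhammer (a + of_nat n) (N - n) / fact (N - n)"
    by (simp add: gbinomial_pochhammer algebra_simps)
  have g2: "(b - c) gchoose n = (-1) ^ n * pochhammer (c - b) n / fact n"
    using gbinomial_pochhammer[of "b - c" n] by simp
  have "c + of_nat N - 1 - of_nat (N - n) + 1 = c + of_nat n" using n by (simp add: of_nat_diff)
  hence g3: "(c + of_nat N - 1) gchoose (N - n) = pochhammer (c + of_nat n) (N - n) / fact (N - n)"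
    by (simp add: gbinomial_pochhammer')
  have "(-1::complex) ^ N = (-1) ^ n * (-1) ^ (N - n)" using n by (simp add: power_add[symmetric])
  hence xN: "(-x) ^ n * (-x) ^ (N - n) = (-1) ^ n * (-1) ^ (N - n) * x ^ N"
    using n by (simp add: power_add[symmetric] power_minus[of x, where n = N])
  have s: "(-1::complex) ^ (N - n) * (-1) ^ (N - n) = 1" by (simp add: power_mult_distrib[symmetric])
  have "pfaff_term a b c x n (N - n) =
          gauss_coeff a (c - b) c n * ((-a - of_nat n) gchoose (N - n)) * ((-x) ^ n * (-x) ^ (N - n))"
    by (simp add: pfaff_term_def mult_ac)
  thus ?thesis
    unfolding xN g1 g2 g3 pa pc gauss_coeff_def using cn s by (simp add: field_simps)
qed

lemma pfaff_term_diagonal_sum: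
  assumes c: "c \<notin> \<int>\<^sub>\<le>\<^sub>0"
  shows "(\<Sum>n\<le>N. pfaff_term a b c x n (N - n)) = gauss_coeff a b c N * x ^ N"
proof -
  have "(\<Sum>n\<le>N. pfaff_term a b c x n (N - n)) =
          x ^ N * (pochhammer a N / pochhammer c N) * (\<Sum>n=0..N. ((b - c) gchoose n) * ((c + of_nat N - 1) gchoose (N - n)))"
    by (simp add: pfaff_term_eq_Vandermonde_summand[OF c] sum_distrib_left atMost_atLeast0)
  also have "(\<Sum>n=0..N. ((b - c) gchoose n) * ((c + of_nat N - 1) gchoose (N - n))) = (b + of_nat N - 1) gchoose N"
    using gbinomial_Vandermonde[of "b - c" "c + of_nat N - 1" N] by (simp add: algebra_simps)
  also have "(b + of_nat N - 1) gchoose N = pochhammer b N / fact N"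
    by (simp add: gbinomial_pochhammer')
  finally show ?thesis
    using pochhammer_neq_0_if_notin_nonpos_Ints[OF c, of N] by (simp add: gauss_coeff_def field_simps)
qed

text \<open>Pfaff's transformation near the origin: summing the absolutely convergent double series
  of \<open>pfaff_term\<close> by rows gives the right-hand side, by antidiagonals the left-hand side.\<close>

lemma hyp_series_pfaff:
  assumes x: "norm x < 1/2" and c: "c \<notin> \<int>\<^sub>\<le>\<^sub>0"
  shows "hyp_series [a, b] [c] x = (1 - x) powr (-a) * hyp_series [a, c - b] [c] (x / (x - 1))"
proof -
  define U where "U = (\<lambda>(n, j). pfaff_term a b c x n j)"
  have "(\<lambda>p. norm (U p)) summable_on UNIV \<times> UNIV"
    using abs_summable_pfaff_term[OF x] by (simp add: U_def case_prod_unfold)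
  hence "U summable_on UNIV \<times> UNIV" by (rule abs_summable_summable)
  then obtain S where S: "(U has_sum S) (UNIV \<times> UNIV)"
    using has_sum_infsum by blast
  have "((\<lambda>n. (1 - x) powr (-a) * (gauss_coeff a (c - b) c n * (x / (x - 1)) ^ n)) has_sum S) UNIV"
    using x by (intro has_sum_SigmaD[OF S]) (simp add: U_def pfaff_term_row_has_sum)
  moreover have "(\<lambda>n. (1 - x) powr (-a) * (gauss_coeff a (c - b) c n * (x / (x - 1)) ^ n)) sums
                   ((1 - x) powr (-a) * hyp_series [a, c - b] [c] (x / (x - 1)))"
    by (intro sums_mult gauss_series_sums norm_pfaff_map_less_one x)
  ultimately have rows: "S = (1 - x) powr (-a) * hyp_series [a, c - b] [c] (x / (x - 1))"
    by (rule sums_unique2[OF has_sum_imp_sums])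
  define \<phi> where "\<phi> = (\<lambda>(N::nat, n::nat). (n, N - n))"
  have "bij_betw \<phi> (SIGMA N:UNIV. {..N}) (UNIV \<times> UNIV)"
    by (rule bij_betwI[where g = "\<lambda>(n, j). (n + j, n)"]) (auto simp: \<phi>_def)
  hence "((\<lambda>p. U (\<phi> p)) has_sum S) (SIGMA N:UNIV. {..N})"
    using has_sum_reindex_bij_betw[of \<phi> _ _ U S] S by simp
  moreover have "((\<lambda>n. U (\<phi> (N, n))) has_sum (\<Sum>n\<le>N. U (n, N - n))) {..N}" for N
    by (rule has_sum_finiteI) (auto simp: \<phi>_def)
  ultimately have "((\<lambda>N. \<Sum>n\<le>N. U (n, N - n)) has_sum S) UNIV"
    by (rule has_sum_SigmaD)
  hence "(\<lambda>N. gauss_coeff a b c N * x ^ N) sums S"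
    by (simp add: U_def pfaff_term_diagonal_sum[OF c] has_sum_imp_sums)
  hence "S = hyp_series [a, b] [c] x"
    by (rule sums_unique2[OF _ gauss_series_sums]) (use x in simp)
  thus ?thesis using rows by simp
qed

lemma holomorphic_on_pfaff_transform:
  assumes "H holomorphic_on cut_plane"
  shows "(\<lambda>x. (1 - x) powr (-a) * H (x / (x - 1))) holomorphic_on cut_plane"
proof -
  have "1 - x \<notin> \<real>\<^sub>\<le>\<^sub>0" if "x \<in> cut_plane" for x
    using one_minus_mult_of_real_notin_nonpos_Reals[OF that, of 1] by simp
  hence "(\<lambda>x. (1 - x) powr (-a)) holomorphic_on cut_plane"
    by (intro holomorphic_on_powr holomorphic_on_diff holomorphic_on_const holomorphic_on_id) auto
  moreover have "(H \<circ> (\<lambda>x. x / (x - 1))) holomorphic_on cut_plane"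
  proof (rule holomorphic_on_compose_gen[OF _ assms])
    show "(\<lambda>x. x / (x - 1)) holomorphic_on cut_plane"
      by (intro holomorphic_on_divide holomorphic_on_diff holomorphic_on_const holomorphic_on_id)
        (auto simp: mem_cut_plane)
  qed (use pfaff_map_mem_cut_plane in auto)
  ultimately show ?thesis by (intro holomorphic_on_mult) (auto simp: o_def)
qed

lemma hyp_continuation_pfaff:
  assumes c: "c \<notin> \<int>\<^sub>\<le>\<^sub>0"
    and G: "hyp_continuation [a, b] [c] G" and H: "hyp_continuation [a, c - b] [c] H"
    and x: "x \<in> cut_plane"
  shows "G x = (1 - x) powr (-a) * H (x / (x - 1))"
proof (rule analytic_continuation_open[of "ball 0 (1/2)" cut_plane G])
  show "G holomorphic_on cut_plane" using G by (simp add: hyp_continuation_def)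
  show "(\<lambda>x. (1 - x) powr (-a) * H (x / (x - 1))) holomorphic_on cut_plane"
    using H by (intro holomorphic_on_pfaff_transform) (simp add: hyp_continuation_def)
  fix z :: complex assume "z \<in> ball 0 (1/2)"
  hence z: "norm z < 1/2" by simp
  have "G z = hyp_series [a, b] [c] z" using G z by (simp add: hyp_continuation_def)
  also have "\<dots> = (1 - z) powr (-a) * hyp_series [a, c - b] [c] (z / (z - 1))"
    by (rule hyp_series_pfaff[OF z c])
  also have "hyp_series [a, c - b] [c] (z / (z - 1)) = H (z / (z - 1))"
    using H norm_pfaff_map_less_one[OF z] by (simp add: hyp_continuation_def)
  finally show "G z = (1 - z) powr (-a) * H (z / (z - 1))" .
qed (use x ball_subset_cut_plane open_cut_plane connected_cut_plane in force)+

section \<open>The coefficients as combinations of Gauss coefficients\<close>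

lemma pochhammer_shift_swap:
  "pochhammer x k * pochhammer (x + of_nat k) n = pochhammer x n * pochhammer (x + of_nat n) k"
  by (metis add.commute pochhammer_product')

lemma pochhammer_reflect_split:
  fixes u :: "'a::comm_ring_1"
  assumes "k \<le> m"
  shows "pochhammer (1 - u - of_nat m) k * pochhammer u (m - k) = (-1) ^ k * pochhammer u m"
proof -
  have "pochhammer u m = pochhammer u (m - k) * pochhammer (u + of_nat (m - k)) k"
    using pochhammer_product'[of u "m - k" k] assms by simp
  also have "u + of_nat (m - k) = - (1 - u - of_nat m + of_nat k - 1)"
    using assms by (simp add: of_nat_diff algebra_simps)
  also have "pochhammer (- (1 - u - of_nat m + of_nat k - 1)) k = (-1) ^ k * pochhammer (1 - u - of_nat m) k"
    by (subst pochhammer_minus) (simp add: algebra_simps)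
  finally show ?thesis by (simp add: mult_ac power_mult_distrib[symmetric])
qed

lemma power_minus_Stirling_pochhammer:
  fixes y :: "'a::comm_ring_1"
  shows "(-y) ^ j = (\<Sum>k\<le>j. of_nat (Stirling j k) * ((-1) ^ k * pochhammer y k))"
proof (induction j)
  case (Suc j)
  define g where "g = (\<lambda>k. (-1) ^ k * pochhammer y k)"
  have g_Suc: "(-y) * g k = g (Suc k) + of_nat k * g k" for k
    unfolding g_def by (simp add: pochhammer_rec' algebra_simps)
  have "(-y) ^ Suc j = (\<Sum>k\<le>j. of_nat (Stirling j k) * ((-y) * g k))"
    using Suc by (simp add: g_def sum_distrib_left mult_ac)
  also have "\<dots> = (\<Sum>k\<le>j. of_nat (Stirling j k) * g (Suc k)) + (\<Sum>k\<le>j. of_nat k * of_nat (Stirling j k) * g k)"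
    by (simp only: g_Suc) (simp add: sum.distrib algebra_simps)
  also have "(\<Sum>k\<le>j. of_nat k * of_nat (Stirling j k) * g k) =
               (\<Sum>k\<le>j. of_nat (Suc k) * of_nat (Stirling j (Suc k)) * g (Suc k))"
    using sum.atMost_Suc_shift[of "\<lambda>k. of_nat k * of_nat (Stirling j k) * g k" j] by simp
  also have "(\<Sum>k\<le>j. of_nat (Stirling j k) * g (Suc k)) + \<dots> =
               (\<Sum>k\<le>Suc j. of_nat (Stirling (Suc j) k) * g k)"
    by (simp only: sum.atMost_Suc_shift[of _ j]) (simp add: sum.distrib[symmetric] algebra_simps)
  finally show ?case by (simp add: g_def)
qed simp

lemma degree_poch_poly: "degree (poch_poly u k) \<le> k"
proof -
  have "degree (poch_poly u k) \<le> (\<Sum>l<k. degree [:u + of_nat l, -1:])"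
    unfolding poch_poly_def using degree_prod_sum_le[of "{..<k}" "\<lambda>l. [:u + of_nat l, -1:]"] by (simp add: o_def)
  also have "\<dots> \<le> (\<Sum>l<k. 1)" by (intro sum_mono) simp
  finally show ?thesis by simp
qed

lemma poly_poch_poly: "poly (poch_poly u k) t = pochhammer (u - t) k"
  by (simp add: poch_poly_def poly_prod pochhammer_prod atLeast0LessThan algebra_simps)

lemma poly_uminus_eq_sum_Stirling_pochhammer:
  fixes Q :: "'a::comm_ring_1 poly"
  assumes "degree Q \<le> m"
  shows "poly Q (-y) =
           (\<Sum>k\<le>m. (\<Sum>j=k..m. coeff Q j * of_nat (Stirling j k)) * ((-1) ^ k * pochhammer y k))"
proof -
  have "poly Q (-y) = (\<Sum>j\<le>m. coeff Q j * (-y) ^ j)"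
    using assms by (simp add: poly_altdef sum.mono_neutral_left[of "{..m}" "{..degree Q}"] coeff_eq_0)
  also have "\<dots> = (\<Sum>j\<le>m. \<Sum>k\<le>m. coeff Q j * of_nat (Stirling j k) * ((-1) ^ k * pochhammer y k))"
  proof (intro sum.cong refl)
    fix j assume "j \<in> {..m}"
    have "(-y) ^ j = (\<Sum>k\<le>j. of_nat (Stirling j k) * ((-1) ^ k * pochhammer y k))"
      by (rule power_minus_Stirling_pochhammer)
    also have "\<dots> = (\<Sum>k\<le>m. of_nat (Stirling j k) * ((-1) ^ k * pochhammer y k))"
      using \<open>j \<in> {..m}\<close> by (intro sum.mono_neutral_left) auto
    finally show "coeff Q j * (-y) ^ j =
                    (\<Sum>k\<le>m. coeff Q j * of_nat (Stirling j k) * ((-1) ^ k * pochhammer y k))"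
      by (simp add: sum_distrib_left mult.assoc)
  qed
  also have "\<dots> = (\<Sum>k\<le>m. \<Sum>j\<le>m. coeff Q j * of_nat (Stirling j k) * ((-1) ^ k * pochhammer y k))"
    by (rule sum.swap)
  also have "\<dots> = (\<Sum>k\<le>m. (\<Sum>j=k..m. coeff Q j * of_nat (Stirling j k)) * ((-1) ^ k * pochhammer y k))"
  proof (intro sum.cong refl)
    fix k
    have "(\<Sum>j\<le>m. coeff Q j * of_nat (Stirling j k) * ((-1) ^ k * pochhammer y k)) =
            (\<Sum>j=k..m. coeff Q j * of_nat (Stirling j k) * ((-1) ^ k * pochhammer y k))"
      by (rule sum.mono_neutral_right) auto
    thus "(\<Sum>j\<le>m. coeff Q j * of_nat (Stirling j k) * ((-1) ^ k * pochhammer y k)) =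
            (\<Sum>j=k..m. coeff Q j * of_nat (Stirling j k)) * ((-1) ^ k * pochhammer y k)"
      by (simp add: sum_distrib_right)
  qed
  finally show ?thesis .
qed

lemma prod_pochhammer_eq_D_coef_sum:
  assumes "length ms = length fs"
  shows "(\<Prod>i<length fs. pochhammer (fs ! i - b + y) (ms ! i)) =
           (\<Sum>k\<le>sum_list ms. D_coef fs ms b k * ((-1) ^ k * pochhammer y k))"
proof -
  define Q where "Q = (\<Prod>i<length fs. poch_poly (fs ! i - b) (ms ! i))"
  have "degree Q \<le> (\<Sum>i<length fs. degree (poch_poly (fs ! i - b) (ms ! i)))"
    unfolding Q_def using degree_prod_sum_le[of "{..<length fs}" "\<lambda>i. poch_poly (fs ! i - b) (ms ! i)"]
    by (simp add: o_def)
  also have "\<dots> \<le> (\<Sum>i<length fs. ms ! i)" by (intro sum_mono degree_poch_poly)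
  also have "\<dots> = sum_list ms" using assms by (simp add: sum_list_sum_nth atLeast0LessThan)
  finally have "degree Q \<le> sum_list ms" .
  moreover have "(\<Prod>i<length fs. pochhammer (fs ! i - b + y) (ms ! i)) = poly Q (-y)"
    by (simp add: Q_def poly_prod poly_poch_poly)
  ultimately show ?thesis
    by (simp add: poly_uminus_eq_sum_Stirling_pochhammer D_coef_def alpha_coef_def Q_def)
qed

lemma prod_list_map_mult:
  "(\<Prod>x\<leftarrow>xs. f x * g x) = (\<Prod>x\<leftarrow>xs. f x) * (\<Prod>x\<leftarrow>xs. g x :: 'a::comm_monoid_mult)"
  by (induct xs) (simp_all add: mult_ac)

lemma prod_list_map_conv_prod_nth:
  "(\<Prod>x\<leftarrow>xs. g x) = (\<Prod>i<length xs. g (xs ! i) :: 'a::comm_monoid_mult)"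
  by (simp add: prod.list_conv_set_nth atLeast0LessThan)

lemma prod_list_map2_conv_prod_nth:
  "length ys = length xs \<Longrightarrow>
     (\<Prod>x\<leftarrow>map2 h xs ys. g x) = (\<Prod>i<length xs. g (h (xs ! i) (ys ! i)) :: 'a::comm_monoid_mult)"
  by (simp add: prod.list_conv_set_nth atLeast0LessThan)

lemma poly_prod_linear: "poly (\<Prod>z\<leftarrow>zs. [:-z, 1:]) t = (\<Prod>z\<leftarrow>zs. t - z :: 'a::comm_ring_1)"
  by (induct zs) (simp_all add: algebra_simps)

lemma pochhammer_add_1_mult_uminus:
  "pochhammer (z + 1) n * (- z) = pochhammer z n * (- of_nat n - z :: 'a::comm_ring_1)"
  using pochhammer_rec[of z n] pochhammer_rec'[of z n] by (simp add: algebra_simps)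

definition multi_pochhammer :: "complex list \<Rightarrow> nat list \<Rightarrow> complex" where
  "multi_pochhammer fs ms = (\<Prod>i<length fs. pochhammer (fs ! i) (ms ! i))"

lemma prod_pochhammer_nth_neq_0:
  fixes fs :: "complex list"
  assumes "\<forall>f\<in>set fs. f \<notin> \<int>\<^sub>\<le>\<^sub>0"
  shows "(\<Prod>i<length fs. pochhammer (fs ! i) (g i)) \<noteq> 0"
proof -
  have "pochhammer (fs ! i) (g i) \<noteq> 0" if "i < length fs" for i
    using bspec[OF assms nth_mem[OF that]] by (simp add: pochhammer_neq_0_if_notin_nonpos_Ints)
  thus ?thesis by simp
qed

lemma poly_P_poly:
  "poly (P_poly fs ms b c) t =
     (\<Sum>k\<le>sum_list ms. pochhammer b k * pochhammer (1 - c + b) k * D_coef fs ms b k *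
        pochhammer (c - b - of_nat (sum_list ms) - t) (sum_list ms - k)) /
     pochhammer (c - b - of_nat (sum_list ms)) (sum_list ms)"
  by (simp add: P_poly_def Let_def poly_sum poly_poch_poly atLeast0AtMost)

lemma poly_P_poly_0:
  assumes "length ms = length fs" "pochhammer (c - b - of_nat (sum_list ms)) (sum_list ms) \<noteq> 0"
  shows "poly (P_poly fs ms b c) 0 = multi_pochhammer fs ms"
proof -
  define m where "m = sum_list ms"
  define u where "u = c - b - of_nat m"
  have u: "1 - c + b = 1 - u - of_nat m" by (simp add: u_def)
  have "poly (P_poly fs ms b c) 0 =
          (\<Sum>k\<le>m. pochhammer b k * D_coef fs ms b k * (pochhammer (1 - c + b) k * pochhammer u (m - k))) /
          pochhammer u m"
    unfolding poly_P_poly by (simp add: m_def u_def mult_ac)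
  also have "\<dots> = (\<Sum>k\<le>m. pochhammer b k * D_coef fs ms b k * ((-1) ^ k * pochhammer u m)) / pochhammer u m"
    unfolding u by (intro arg_cong2[where f = "(/)"] sum.cong refl) (simp add: pochhammer_reflect_split)
  also have "\<dots> = (\<Sum>k\<le>m. D_coef fs ms b k * ((-1) ^ k * pochhammer b k))"
    using assms(2) by (simp add: sum_divide_distrib m_def u_def mult_ac)
  also have "\<dots> = multi_pochhammer fs ms"
    using prod_pochhammer_eq_D_coef_sum[OF assms(1), of b b] by (simp add: m_def multi_pochhammer_def)
  finally show ?thesis .
qed

lemma pochhammer_mult_poly_P_poly_minus_of_nat:
  assumes "pochhammer (c - b - of_nat (sum_list ms)) (sum_list ms) \<noteq> 0"
  shows "pochhammer (c - b - of_nat (sum_list ms)) n * poly (P_poly fs ms b c) (- of_nat n) =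
           (\<Sum>k\<le>sum_list ms. D_coef fs ms b k * (-1) ^ k * pochhammer b k * pochhammer (c - b - of_nat k) n)"
proof -
  define m where "m = sum_list ms"
  define u where "u = c - b - of_nat m"
  have u: "1 - c + b = 1 - u - of_nat m" by (simp add: u_def)
  have shift: "pochhammer u n * pochhammer (u + of_nat n) (m - k) = pochhammer u (m - k) * pochhammer (c - b - of_nat k) n"
    if "k \<le> m" for k
  proof -
    have "u + of_nat (m - k) = c - b - of_nat k" using that by (simp add: u_def of_nat_diff)
    thus ?thesis using pochhammer_shift_swap[of u n "m - k"] by simp
  qed
  have "pochhammer u n * poly (P_poly fs ms b c) (- of_nat n) =
          (\<Sum>k\<le>m. pochhammer b k * D_coef fs ms b k * (pochhammer (1 - c + b) k *
                    (pochhammer u n * pochhammer (u + of_nat n) (m - k)))) / pochhammer u m"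
    unfolding poly_P_poly by (simp add: m_def u_def sum_distrib_left mult_ac)
  also have "\<dots> = (\<Sum>k\<le>m. pochhammer b k * D_coef fs ms b k * pochhammer (c - b - of_nat k) n *
                    (pochhammer (1 - u - of_nat m) k * pochhammer u (m - k))) / pochhammer u m"
    unfolding u by (intro arg_cong2[where f = "(/)"] sum.cong refl) (simp add: shift mult_ac)
  also have "\<dots> = (\<Sum>k\<le>m. pochhammer b k * D_coef fs ms b k * pochhammer (c - b - of_nat k) n *
                    ((-1) ^ k * pochhammer u m)) / pochhammer u m"
    by (intro arg_cong2[where f = "(/)"] sum.cong refl) (simp add: pochhammer_reflect_split)
  also have "\<dots> = (\<Sum>k\<le>m. D_coef fs ms b k * (-1) ^ k * pochhammer b k * pochhammer (c - b - of_nat k) n)"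
    using assms by (simp add: sum_divide_distrib m_def u_def mult_ac)
  finally show ?thesis by (simp add: m_def u_def)
qed

lemma poly_P_poly_minus_of_nat_mult:
  assumes len: "length ms = length fs"
    and poch: "pochhammer (c - b - of_nat (sum_list ms)) (sum_list ms) \<noteq> 0"
    and P: "P_poly fs ms b c = smult (lead_coeff (P_poly fs ms b c)) (\<Prod>z\<leftarrow>\<zeta>. [:-z, 1:])"
  shows "poly (P_poly fs ms b c) (- of_nat n) * (\<Prod>z\<leftarrow>\<zeta>. pochhammer z n) =
           multi_pochhammer fs ms * (\<Prod>z\<leftarrow>\<zeta>. pochhammer (z + 1) n)"
proof -
  define L where "L = lead_coeff (P_poly fs ms b c)"
  have poly_P: "poly (P_poly fs ms b c) t = L * (\<Prod>z\<leftarrow>\<zeta>. t - z)" for t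
    by (subst P) (simp add: L_def poly_prod_linear)
  have "poly (P_poly fs ms b c) (- of_nat n) * (\<Prod>z\<leftarrow>\<zeta>. pochhammer z n) =
          L * (\<Prod>z\<leftarrow>\<zeta>. pochhammer z n * (- of_nat n - z))"
    by (simp add: poly_P prod_list_map_mult mult_ac)
  also have "\<dots> = L * (\<Prod>z\<leftarrow>\<zeta>. (- z) * pochhammer (z + 1) n)"
    by (simp only: pochhammer_add_1_mult_uminus[symmetric] mult.commute)
  also have "\<dots> = L * (\<Prod>z\<leftarrow>\<zeta>. - z) * (\<Prod>z\<leftarrow>\<zeta>. pochhammer (z + 1) n)"
    by (simp only: prod_list_map_mult mult.assoc)
  also have "L * (\<Prod>z\<leftarrow>\<zeta>. - z) = multi_pochhammer fs ms"
    using poly_P_poly_0[OF len poch] poly_P[of 0] by simp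
  finally show ?thesis .
qed

definition gauss_weight :: "complex list \<Rightarrow> nat list \<Rightarrow> complex \<Rightarrow> nat \<Rightarrow> complex" where
  "gauss_weight fs ms b k = D_coef fs ms b k * (-1) ^ k * pochhammer b k / multi_pochhammer fs ms"

lemma sum_gauss_weight_mult_eq:
  "(\<Sum>k\<le>sum_list ms. gauss_weight fs ms b k * gauss_coeff a (\<beta> k) c n) =
     (\<Sum>k\<le>sum_list ms. D_coef fs ms b k * (-1) ^ k * pochhammer b k * pochhammer (\<beta> k) n) *
     (pochhammer a n / (multi_pochhammer fs ms * pochhammer c n * fact n))"
  by (simp add: gauss_weight_def gauss_coeff_def sum_distrib_right sum_distrib_left sum_divide_distrib mult_ac)

lemma hyp_coeff_lhs_eq_sum_gauss_coeff:
  assumes len: "length ms = length fs" and fs: "\<forall>f\<in>set fs. f \<notin> \<int>\<^sub>\<le>\<^sub>0"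
  shows "hyp_coeff (a # b # map2 (\<lambda>f k. f + of_nat k) fs ms) (c # fs) n =
           (\<Sum>k\<le>sum_list ms. gauss_weight fs ms b k * gauss_coeff a (b + of_nat k) c n)"
proof -
  define r where "r = length fs"
  define PL where "PL = (\<Prod>i<r. pochhammer (fs ! i + of_nat (ms ! i)) n)"
  define PF where "PF = (\<Prod>i<r. pochhammer (fs ! i) n)"
  define PN where "PN = (\<Prod>i<r. pochhammer (fs ! i + of_nat n) (ms ! i))"
  have "PF \<noteq> 0" "multi_pochhammer fs ms \<noteq> 0"
    using prod_pochhammer_nth_neq_0[OF fs, of "\<lambda>_. n"] prod_pochhammer_nth_neq_0[OF fs, of "(!) ms"]
    by (simp_all add: PF_def r_def multi_pochhammer_def)
  moreover have "PL * multi_pochhammer fs ms = PN * PF"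
    by (simp add: PL_def PN_def PF_def multi_pochhammer_def r_def pochhammer_shift_swap
        prod.distrib[symmetric] mult.commute)
  ultimately have PL: "PL / PF = PN / multi_pochhammer fs ms"
    by (simp add: field_simps)
  have "hyp_coeff (a # b # map2 (\<lambda>f k. f + of_nat k) fs ms) (c # fs) n =
          pochhammer a n * pochhammer b n * PL / (pochhammer c n * PF * fact n)"
    using len by (simp add: hyp_coeff_def prod_list_map2_conv_prod_nth prod_list_map_conv_prod_nth
        PL_def PF_def r_def mult_ac)
  also have "\<dots> = pochhammer a n * pochhammer b n * (PL / PF) / (pochhammer c n * fact n)"
    by (simp add: mult_ac)
  also have "\<dots> = pochhammer b n * PN * (pochhammer a n / (multi_pochhammer fs ms * pochhammer c n * fact n))"
    unfolding PL by (simp add: mult_ac)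
  also have "pochhammer b n * PN =
      (\<Sum>k\<le>sum_list ms. D_coef fs ms b k * (-1) ^ k * pochhammer b k * pochhammer (b + of_nat k) n)"
  proof -
    have "pochhammer b n * PN =
        (\<Sum>k\<le>sum_list ms. D_coef fs ms b k * (-1) ^ k * (pochhammer b n * pochhammer (b + of_nat n) k))"
      using prod_pochhammer_eq_D_coef_sum[OF len, of b "b + of_nat n"]
      by (simp add: PN_def r_def sum_distrib_left mult_ac)
    also have "\<dots> =
        (\<Sum>k\<le>sum_list ms. D_coef fs ms b k * (-1) ^ k * (pochhammer b k * pochhammer (b + of_nat k) n))"
      by (intro sum.cong refl arg_cong2[where f = "(*)"] pochhammer_shift_swap[symmetric])
    finally show ?thesis by (simp add: mult.assoc)
  qed
  finally show ?thesis by (simp only: sum_gauss_weight_mult_eq)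
qed

lemma hyp_coeff_rhs_eq_sum_gauss_coeff:
  assumes len: "length ms = length fs" and fs: "\<forall>f\<in>set fs. f \<notin> \<int>\<^sub>\<le>\<^sub>0"
    and poch: "pochhammer (c - b - of_nat (sum_list ms)) (sum_list ms) \<noteq> 0"
    and P: "P_poly fs ms b c = smult (lead_coeff (P_poly fs ms b c)) (\<Prod>z\<leftarrow>\<zeta>. [:-z, 1:])"
    and \<zeta>: "\<forall>z\<in>set \<zeta>. z \<notin> \<int>\<^sub>\<le>\<^sub>0"
  shows "hyp_coeff (a # (c - b - of_nat (sum_list ms)) # map (\<lambda>z. z + 1) \<zeta>) (c # \<zeta>) n =
           (\<Sum>k\<le>sum_list ms. gauss_weight fs ms b k * gauss_coeff a (c - b - of_nat k) c n)"
proof -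
  define u where "u = c - b - of_nat (sum_list ms)"
  have "multi_pochhammer fs ms \<noteq> 0"
    using prod_pochhammer_nth_neq_0[OF fs] by (simp add: multi_pochhammer_def)
  moreover have "pochhammer z n \<noteq> 0" if "z \<in> set \<zeta>" for z
    using bspec[OF \<zeta> that] by (simp add: pochhammer_neq_0_if_notin_nonpos_Ints)
  hence "(\<Prod>z\<leftarrow>\<zeta>. pochhammer z n) \<noteq> 0" by (auto simp: prod_list_zero_iff)
  ultimately have ratio: "(\<Prod>z\<leftarrow>\<zeta>. pochhammer (z + 1) n) / (\<Prod>z\<leftarrow>\<zeta>. pochhammer z n) =
                     poly (P_poly fs ms b c) (- of_nat n) / multi_pochhammer fs ms"
    using poly_P_poly_minus_of_nat_mult[OF len poch P, of n] by (simp add: field_simps)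
  have "hyp_coeff (a # u # map (\<lambda>z. z + 1) \<zeta>) (c # \<zeta>) n =
          pochhammer a n * pochhammer u n *
          ((\<Prod>z\<leftarrow>\<zeta>. pochhammer (z + 1) n) / (\<Prod>z\<leftarrow>\<zeta>. pochhammer z n)) / (pochhammer c n * fact n)"
    by (simp add: hyp_coeff_def o_def mult_ac)
  also have "\<dots> = pochhammer u n * poly (P_poly fs ms b c) (- of_nat n) *
                     (pochhammer a n / (multi_pochhammer fs ms * pochhammer c n * fact n))"
    unfolding ratio by (simp add: mult_ac)
  finally have "hyp_coeff (a # u # map (\<lambda>z. z + 1) \<zeta>) (c # \<zeta>) n =
           pochhammer u n * poly (P_poly fs ms b c) (- of_nat n) *
           (pochhammer a n / (multi_pochhammer fs ms * pochhammer c n * fact n))" .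
  thus ?thesis
    unfolding sum_gauss_weight_mult_eq u_def pochhammer_mult_poly_P_poly_minus_of_nat[OF poch] .
qed

theorem theorem1:
  fixes r :: nat and ms :: "nat list" and fs :: "complex list" and a b c :: complex
    and \<zeta> :: "complex list" and x :: complex
  assumes "r \<ge> 1" and "length ms = r" and "length fs = r"
    and "pochhammer (c - b - of_nat (sum_list ms)) (sum_list ms) \<noteq> 0"
    and "\<forall>n::nat. c \<noteq> - of_nat n"
    and "\<forall>f\<in>set fs. \<forall>n::nat. f \<noteq> - of_nat n"
    and "length \<zeta> = sum_list ms"
    and "P_poly fs ms b c \<noteq> 0"
    and "P_poly fs ms b c = smult (lead_coeff (P_poly fs ms b c)) (\<Prod>z\<leftarrow>\<zeta>. [:-z, 1:])"
    and "\<forall>z\<in>set \<zeta>. \<forall>n::nat. z \<noteq> - of_nat n"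
    and "x \<in> cut_plane"
  shows "hypF (a # b # map2 (\<lambda>f k. f + of_nat k) fs ms) (c # fs) x =
         (1 - x) powr (- a) *
         hypF (a # (c - b - of_nat (sum_list ms)) # map (\<lambda>z. z + 1) \<zeta>) (c # \<zeta>) (x / (x - 1))"
proof -
  have len: "length ms = length fs" using assms(2,3) by simp
  have c: "c \<notin> \<int>\<^sub>\<le>\<^sub>0" and fs: "\<forall>f\<in>set fs. f \<notin> \<int>\<^sub>\<le>\<^sub>0"
    and \<zeta>: "\<forall>z\<in>set \<zeta>. z \<notin> \<int>\<^sub>\<le>\<^sub>0"
    using assms(5,6,10) by (simp_all add: notin_nonpos_Ints_iff)
  note x = assms(11)
  define w where "w = gauss_weight fs ms b"
  define G where "G = (\<lambda>k. hypF [a, b + of_nat k] [c])"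
  define H where "H = (\<lambda>k. hypF [a, c - b - of_nat k] [c])"
  have G: "hyp_continuation [a, b + of_nat k] [c] (G k)"
    and H: "hyp_continuation [a, c - b - of_nat k] [c] (H k)" for k
    unfolding G_def H_def using ex_hyp_continuation_gauss[OF c] hyp_continuation_hypF by blast+
  have pfaff: "G k x = (1 - x) powr (- a) * H k (x / (x - 1))" for k
    using hyp_continuation_pfaff[OF c G[of k] _ x] H[of k] by (simp add: diff_diff_eq)
  have "hypF (a # b # map2 (\<lambda>f k. f + of_nat k) fs ms) (c # fs) x = (\<Sum>k\<le>sum_list ms. w k * G k x)"
    by (intro hypF_eqI[OF hyp_continuation_sum[OF G] x])
      (simp add: hyp_coeff_lhs_eq_sum_gauss_coeff[OF len fs] w_def)
  also have "\<dots> = (1 - x) powr (- a) * (\<Sum>k\<le>sum_list ms. w k * H k (x / (x - 1)))"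
    by (simp add: pfaff sum_distrib_left mult_ac)
  also have "(\<Sum>k\<le>sum_list ms. w k * H k (x / (x - 1))) =
      hypF (a # (c - b - of_nat (sum_list ms)) # map (\<lambda>z. z + 1) \<zeta>) (c # \<zeta>) (x / (x - 1))"
    by (intro hypF_eqI[OF hyp_continuation_sum[OF H] pfaff_map_mem_cut_plane[OF x], symmetric])
      (simp add: hyp_coeff_rhs_eq_sum_gauss_coeff[OF len fs assms(4,9) \<zeta>] w_def)
  finally show ?thesis .
qed

end
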